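(* Let $q$ be a prime power and let $\mathcal{M}_q$ be the set of monic polynomials in $\mathbb{F}_q[T]$. For $f\in\mathcal{M}_q$ of degree $n\ge1$ let $P_{GL}(f)=|\{M\in\mathrm{GL}(n,\mathbb{F}_q):\det(T-M)=f\}|/|\mathrm{GL}(n,\mathbb{F}_q)|$, and set $P_{GL}(1)=1$. For $i\ge1$ define $\alpha_i^{GL}:\mathcal{M}_q\to\mathbb{R}$ by $\alpha_i^{GL}(g)=|g|^{-i}$ if $g(0)\ne0$ and $\alpha_i^{GL}(g)=0$ if $g(0)=0$. Then for every $f\in\mathcal{M}_q$, $$P_{GL}(f)=\lim_{k\to\infty}(\alpha_1^{GL}\ast\alpha_2^{GL}\ast\cdots\ast\alpha_k^{GL})(f).$$
   Context: $|g|=q^{\deg g}$ for $g\in\mathcal{M}_q$. The Dirichlet convolution of functions $\alpha,\beta:\mathcal{M}_q\to\mathbb{C}$ is $(\alpha\ast\beta)(f)=\sum_{g,h\in\mathcal{M}_q,\ gh=f}\alpha(g)\beta(h)$. *)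

theory Defs
  imports Complex_Main "Jordan_Normal_Form.Char_Poly"
begin

text \<open>F_q is modelled as a finite field type 'a; q = CARD('a).\<close>

definition monic_poly :: "'a::field poly \<Rightarrow> bool" where
  "monic_poly f \<longleftrightarrow> lead_coeff f = 1"

definition poly_norm :: "'a::{finite,field} poly \<Rightarrow> real" where
  "poly_norm g = real (card (UNIV :: 'a set)) ^ degree g"

definition dconv :: "('a::{finite,field} poly \<Rightarrow> real) \<Rightarrow> ('a poly \<Rightarrow> real) \<Rightarrow> 'a poly \<Rightarrow> real" where
  "dconv \<alpha> \<beta> f = (\<Sum>(g,h)\<in>{(g,h). monic_poly g \<and> monic_poly h \<and> g * h = f}. \<alpha> g * \<beta> h)"

definition alpha_GL :: "nat \<Rightarrow> 'a::{finite,field} poly \<Rightarrow> real" where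
  "alpha_GL i g = (if poly g 0 \<noteq> 0 then inverse (poly_norm g ^ i) else 0)"

fun conv_alpha_GL :: "nat \<Rightarrow> 'a::{finite,field} poly \<Rightarrow> real" where
  "conv_alpha_GL 0 = (\<lambda>f. if f = 1 then 1 else 0)"
| "conv_alpha_GL (Suc k) = dconv (conv_alpha_GL k) (alpha_GL (Suc k))"

text \<open>GL(n, F_q) as invertible n x n matrices; det(T - M) is char_poly M.\<close>
definition GL_mats :: "nat \<Rightarrow> 'a::{finite,field} mat set" where
  "GL_mats n = {M \<in> carrier_mat n n. det M \<noteq> 0}"

definition P_GL :: "'a::{finite,field} poly \<Rightarrow> real" where
  "P_GL f = (if f = 1 then 1 else
     real (card {M \<in> GL_mats (degree f). char_poly M = f}) / real (card (GL_mats (degree f :: nat) :: 'a mat set)))"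

end

theory Submission
  imports Defs
begin

(* For monic f of degree n let P_mat f be the number of n x n matrices with characteristic
   polynomial f, divided by |GL_n(F_q)|. It equals P_GL f when f(0) <> 0; when f(0) = 0 both
   P_GL f and all the convolutions vanish.

   Classifying the pairs (M, v) of such a matrix and a vector by the dimension d of the Krylov
   space of v gives q^n * P_mat f = (sum over monic h dividing f of P_mat h): completing the
   Krylov basis v, M v, ..., M^(d-1) v to a basis P turns P^-1 M P into a block triangular matrix
   whose upper left block is the companion matrix of a monic divisor k of f of degree d and whose
   lower right block is an arbitrary matrix with characteristic polynomial f div k.

   On the other side, alpha_GL (i+1) is alpha_GL i times the completely multiplicative weight
   |g|^-1, so associativity of the convolution gives, for f(0) <> 0,
   |f| * c_(k+1)(f) = (sum over monic h dividing f of c_k(h)), where c_k = conv_alpha_GL k.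
   Hence c_k(f) and P_mat f satisfy the same affine recursion; since |f| > 1 for deg f > 0,
   induction on the degree gives c_k(f) --> P_mat f. *)

section \<open>Independent columns and invertible matrices over a finite field\<close>

lemma card_UNIV_field_ge_2: "card (UNIV :: 'a::{finite,field} set) \<ge> 2"
proof -
  have "card {0 :: 'a, 1} \<le> card (UNIV :: 'a set)" by (intro card_mono) auto
  then show ?thesis by simp
qed

lemma card_carrier_vec: "card (carrier_vec n :: 'a::finite vec set) = card (UNIV :: 'a set) ^ n"
proof -
  let ?L = "{xs. set xs \<subseteq> (UNIV :: 'a set) \<and> length xs = n}"
  have "bij_betw vec_of_list ?L (carrier_vec n)"
  proof (rule bij_betw_byWitness[where f' = list_of_vec])
    show "\<forall>xs\<in>?L. list_of_vec (vec_of_list xs) = xs" by (simp add: list_vec)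
    show "\<forall>v\<in>carrier_vec n. vec_of_list (list_of_vec v) = v" by (simp add: vec_list)
    show "vec_of_list ` ?L \<subseteq> carrier_vec n" by (auto intro: carrier_vecI)
    show "list_of_vec ` carrier_vec n \<subseteq> ?L" by auto
  qed
  then have "card (carrier_vec n :: 'a vec set) = card ?L" by (rule bij_betw_same_card[symmetric])
  also have "\<dots> = card (UNIV :: 'a set) ^ n" by (rule card_lists_length_eq) simp
  finally show ?thesis .
qed

lemma finite_carrier_vec[simp]: "finite (carrier_vec n :: 'a::finite vec set)"
  by (rule card_ge_0_finite) (simp add: card_carrier_vec finite_UNIV_card_ge_0)

lemma card_carrier_mat: "card (carrier_mat n m :: 'a::finite mat set) = card (UNIV :: 'a set) ^ (n * m)"
proof -
  let ?L = "{L. set L \<subseteq> (carrier_vec n :: 'a vec set) \<and> length L = m}"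
  have "bij_betw (mat_of_cols n) ?L (carrier_mat n m)"
  proof (rule bij_betw_byWitness[where f' = cols])
    show "\<forall>L\<in>?L. cols (mat_of_cols n L) = L" by (auto intro: cols_mat_of_cols)
    show "\<forall>A\<in>carrier_mat n m. mat_of_cols n (cols A) = A" by (auto intro: mat_of_cols_cols)
    show "cols ` carrier_mat n m \<subseteq> ?L" by (auto simp: cols_def)
  qed auto
  then have "card (carrier_mat n m :: 'a mat set) = card ?L" by (simp add: bij_betw_same_card)
  also have "\<dots> = (card (UNIV :: 'a set) ^ n) ^ m" by (simp add: card_lists_length_eq card_carrier_vec)
  finally show ?thesis by (simp add: power_mult)
qed

lemma finite_carrier_mat[simp]: "finite (carrier_mat n m :: 'a::finite mat set)"
  by (rule card_ge_0_finite) (simp add: card_carrier_mat finite_UNIV_card_ge_0)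

lemma mult_unit_vec_eq_col:
  fixes A :: "'a::semiring_1 mat"
  assumes "A \<in> carrier_mat n m" "j < m"
  shows "A *\<^sub>v unit_vec m j = col A j"
  using assms by (intro eq_vecI) auto

definition cols_indep :: "nat \<Rightarrow> 'a::field vec list \<Rightarrow> bool" where
  "cols_indep n L \<longleftrightarrow> set L \<subseteq> carrier_vec n \<and>
     (\<forall>x\<in>carrier_vec (length L). mat_of_cols n L *\<^sub>v x = 0\<^sub>v n \<longrightarrow> x = 0\<^sub>v (length L))"

definition cols_span :: "nat \<Rightarrow> 'a::field vec list \<Rightarrow> 'a vec set" where
  "cols_span n L = (\<lambda>x. mat_of_cols n L *\<^sub>v x) ` carrier_vec (length L)"

lemma mat_of_cols_mult_vec_index:
  assumes "x \<in> carrier_vec (length L)" "r < n"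
  shows "(mat_of_cols n L *\<^sub>v x) $ r = (\<Sum>i<length L. L ! i $ r * x $ i)"
  using assms by (auto simp: mat_of_cols_def scalar_prod_def row_def atLeast0LessThan
      intro!: sum.cong)

lemma mat_of_cols_snoc_mult_vec_index:
  assumes "x \<in> carrier_vec (Suc (length L))" "r < n"
  shows "(mat_of_cols n (L @ [w]) *\<^sub>v x) $ r =
    (mat_of_cols n L *\<^sub>v vec (length L) (($) x)) $ r + w $ r * x $ length L"
proof -
  have "(mat_of_cols n L *\<^sub>v vec (length L) (($) x)) $ r = (\<Sum>i<length L. L ! i $ r * x $ i)"
    using mat_of_cols_mult_vec_index[of "vec (length L) (($) x)" L r n] assms by simp
  moreover have "(mat_of_cols n (L @ [w]) *\<^sub>v x) $ r = (\<Sum>i<Suc (length L). (L @ [w]) ! i $ r * x $ i)"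
    using mat_of_cols_mult_vec_index[of x "L @ [w]" r n] assms by simp
  ultimately show ?thesis by (simp add: nth_append)
qed

lemma cols_span_carrier: "cols_span n L \<subseteq> carrier_vec n"
  unfolding cols_span_def using mult_mat_vec_carrier[OF mat_of_cols_carrier(1)] by auto

lemma cols_indep_Nil: "cols_indep n []"
  unfolding cols_indep_def by auto

lemma cols_span_Nil: "cols_span n [] = {0\<^sub>v n}"
  unfolding cols_span_def by (auto simp: mat_of_cols_def scalar_prod_def intro!: eq_vecI image_eqI[of _ _ "0\<^sub>v 0"])

lemma cols_indep_inj:
  assumes "cols_indep n L"
  shows "inj_on (\<lambda>x. mat_of_cols n L *\<^sub>v x) (carrier_vec (length L))"
proof (rule inj_onI)
  fix x y assume x: "x \<in> carrier_vec (length L)" and y: "y \<in> carrier_vec (length L)"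
    and eq: "mat_of_cols n L *\<^sub>v x = mat_of_cols n L *\<^sub>v y"
  have "mat_of_cols n L *\<^sub>v (x - y) = mat_of_cols n L *\<^sub>v x - mat_of_cols n L *\<^sub>v y"
    using x y by (intro mult_minus_distrib_mat_vec) auto
  also have "\<dots> = 0\<^sub>v n" using eq by (intro eq_vecI) auto
  finally have "x - y = 0\<^sub>v (length L)" using assms x y unfolding cols_indep_def by auto
  then show "x = y" using x y by (intro eq_vecI) (auto simp: vec_eq_iff)
qed

lemma card_cols_span:
  assumes "cols_indep n L"
  shows "card (cols_span n L :: 'a::{finite,field} vec set) = card (UNIV :: 'a set) ^ length L"
  unfolding cols_span_def using card_image[OF cols_indep_inj[OF assms]] by (simp add: card_carrier_vec)

lemma cols_indep_length_le:
  assumes "cols_indep n (L :: 'a::{finite,field} vec list)"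
  shows "length L \<le> n"
proof -
  have "card (cols_span n L) \<le> card (carrier_vec n :: 'a vec set)"
    by (intro card_mono finite_carrier_vec cols_span_carrier)
  then have "card (UNIV :: 'a set) ^ length L \<le> card (UNIV :: 'a set) ^ n"
    by (simp add: card_cols_span[OF assms] card_carrier_vec)
  then show ?thesis using card_UNIV_field_ge_2[where 'a='a] by (simp add: power_le_imp_le_exp)
qed

lemma cols_indep_append_left:
  assumes "cols_indep n (L @ W)"
  shows "cols_indep n L"
  unfolding cols_indep_def
proof (intro conjI ballI impI)
  show "set L \<subseteq> carrier_vec n" using assms unfolding cols_indep_def by auto
  fix x :: "'a vec" assume x: "x \<in> carrier_vec (length L)" and Lx: "mat_of_cols n L *\<^sub>v x = 0\<^sub>v n"
  define x' where "x' = vec (length (L @ W)) (\<lambda>i. if i < length L then x $ i else 0)"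
  have x': "x' \<in> carrier_vec (length (L @ W))" unfolding x'_def by simp
  have "(mat_of_cols n (L @ W) *\<^sub>v x') $ r = (mat_of_cols n L *\<^sub>v x) $ r" if "r < n" for r
  proof -
    have "(\<Sum>i<length (L @ W). (L @ W) ! i $ r * x' $ i) = (\<Sum>i<length L. (L @ W) ! i $ r * x' $ i)"
      by (rule sum.mono_neutral_right) (auto simp: x'_def)
    also have "\<dots> = (\<Sum>i<length L. L ! i $ r * x $ i)"
      by (intro sum.cong) (auto simp: x'_def nth_append)
    finally show ?thesis
      unfolding mat_of_cols_mult_vec_index[OF x' that] mat_of_cols_mult_vec_index[OF x that] .
  qed
  then have "mat_of_cols n (L @ W) *\<^sub>v x' = 0\<^sub>v n" using Lx by (intro eq_vecI) auto
  then have "x' = 0\<^sub>v (length (L @ W))" using assms x' unfolding cols_indep_def by blast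
  then have "x' $ i = 0" if "i < length L" for i using that by simp
  then have "x $ i = 0" if "i < length L" for i using that by (simp add: x'_def)
  then show "x = 0\<^sub>v (length L)" using x by (intro eq_vecI) auto
qed

lemma cols_indep_snoc_not_in_span:
  assumes "cols_indep n (L @ [w])"
  shows "w \<notin> cols_span n L"
proof
  assume "w \<in> cols_span n L"
  then obtain y where y: "y \<in> carrier_vec (length L)" and w: "w = mat_of_cols n L *\<^sub>v y"
    unfolding cols_span_def by auto
  define x where "x = vec (Suc (length L)) (\<lambda>i. if i < length L then y $ i else - 1)"
  have x: "x \<in> carrier_vec (Suc (length L))" unfolding x_def by simp
  have xy: "vec (length L) (($) x) = y" using y by (intro eq_vecI) (auto simp: x_def)
  have x_last: "x $ length L = - 1" by (simp add: x_def)
  have "(mat_of_cols n (L @ [w]) *\<^sub>v x) $ r = 0" if "r < n" for r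
    using mat_of_cols_snoc_mult_vec_index[OF x that, of w] by (simp add: xy x_last flip: w)
  then have "mat_of_cols n (L @ [w]) *\<^sub>v x = 0\<^sub>v n" by (intro eq_vecI) auto
  then have "x = 0\<^sub>v (Suc (length L))" using assms x unfolding cols_indep_def by auto
  then have "x $ length L = 0" by simp
  then show False by (simp add: x_def)
qed

lemma cols_indep_snocI:
  assumes L: "cols_indep n L" and w: "w \<in> carrier_vec n" and nw: "w \<notin> cols_span n L"
  shows "cols_indep n (L @ [w])"
  unfolding cols_indep_def
proof (intro conjI ballI impI)
  show "set (L @ [w]) \<subseteq> carrier_vec n" using L w unfolding cols_indep_def by auto
  fix x :: "'a vec" assume x: "x \<in> carrier_vec (length (L @ [w]))"
    and Lwx: "mat_of_cols n (L @ [w]) *\<^sub>v x = 0\<^sub>v n"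
  define y where "y = vec (length L) (($) x)"
  define c where "c = x $ length L"
  have y: "y \<in> carrier_vec (length L)" unfolding y_def by simp
  have eq: "(mat_of_cols n L *\<^sub>v y) $ r + w $ r * c = 0" if "r < n" for r
    using mat_of_cols_snoc_mult_vec_index[of x L r n w] Lwx x that by (simp add: y_def c_def)
  have c: "c = 0"
  proof (rule ccontr)
    assume "c \<noteq> 0"
    have "mat_of_cols n L *\<^sub>v ((- 1 / c) \<cdot>\<^sub>v y) = (- 1 / c) \<cdot>\<^sub>v (mat_of_cols n L *\<^sub>v y)"
      by (rule mult_mat_vec[OF mat_of_cols_carrier(1) y])
    also have "\<dots> = w"
    proof (intro eq_vecI)
      fix r assume "r < dim_vec w"
      then have "(mat_of_cols n L *\<^sub>v y) $ r = - (w $ r * c)"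
        using w eq by (simp add: eq_neg_iff_add_eq_0)
      then show "((- 1 / c) \<cdot>\<^sub>v (mat_of_cols n L *\<^sub>v y)) $ r = w $ r"
        using w \<open>r < dim_vec w\<close> \<open>c \<noteq> 0\<close> by simp
    qed (use w in simp)
    finally show False using nw y unfolding cols_span_def by auto
  qed
  have "mat_of_cols n L *\<^sub>v y = 0\<^sub>v n" using eq c by (intro eq_vecI) auto
  then have "y = 0\<^sub>v (length L)" using L y unfolding cols_indep_def by blast
  then show "x = 0\<^sub>v (length (L @ [w]))"
    using x c by (intro eq_vecI) (auto simp: y_def c_def vec_eq_iff less_Suc_eq)
qed

definition indep_extensions :: "nat \<Rightarrow> 'a::field vec list \<Rightarrow> nat \<Rightarrow> 'a vec list set" where
  "indep_extensions n L m = {W. length W = m \<and> set W \<subseteq> carrier_vec n \<and> cols_indep n (L @ W)}"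

definition num_basis_completions :: "nat \<Rightarrow> nat \<Rightarrow> nat \<Rightarrow> nat" where
  "num_basis_completions q n d = (\<Prod>j\<in>{d..<n}. q ^ n - q ^ j)"

lemma finite_indep_extensions: "finite (indep_extensions n (L :: 'a::{finite,field} vec list) m)"
  by (rule finite_subset[OF _ finite_lists_length_eq[OF finite_carrier_vec, of n m]])
    (auto simp: indep_extensions_def)

lemma indep_extensions_Suc:
  assumes "cols_indep n L"
  shows "indep_extensions n L (Suc m) =
    (\<lambda>(w, W). w # W) ` (SIGMA w:carrier_vec n - cols_span n L. indep_extensions n (L @ [w]) m)"
proof (intro equalityI subsetI)
  fix X assume X: "X \<in> indep_extensions n L (Suc m)"
  then obtain w W where X_eq: "X = w # W" unfolding indep_extensions_def by (cases X) auto
  have "cols_indep n ((L @ [w]) @ W)" and w: "w \<in> carrier_vec n"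
    using X unfolding X_eq indep_extensions_def by auto
  then have "w \<notin> cols_span n L"
    using cols_indep_snoc_not_in_span cols_indep_append_left by blast
  then show "X \<in> (\<lambda>(w, W). w # W) ` (SIGMA w:carrier_vec n - cols_span n L. indep_extensions n (L @ [w]) m)"
    using X w unfolding X_eq indep_extensions_def by auto
qed (auto simp: indep_extensions_def)

lemma card_indep_extensions:
  assumes "cols_indep n (L :: 'a::{finite,field} vec list)"
  shows "card (indep_extensions n L m) = (\<Prod>j\<in>{length L..<length L + m}. card (UNIV :: 'a set) ^ n - card (UNIV :: 'a set) ^ j)"
  using assms
proof (induction m arbitrary: L)
  case 0
  then have "indep_extensions n L 0 = {[]}" unfolding indep_extensions_def by auto
  then show ?case by simp
next
  case (Suc m)
  let ?q = "card (UNIV :: 'a set)" and ?A = "carrier_vec n - cols_span n L"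
  have IH: "card (indep_extensions n (L @ [w]) m) = (\<Prod>j\<in>{Suc (length L)..<Suc (length L) + m}. ?q ^ n - ?q ^ j)"
    if "w \<in> ?A" for w
    using Suc.IH[of "L @ [w]"] cols_indep_snocI[OF Suc.prems] that by auto
  have "card ?A = card (carrier_vec n :: 'a vec set) - card (cols_span n L)"
    by (rule card_Diff_subset[OF finite_subset[OF cols_span_carrier finite_carrier_vec] cols_span_carrier])
  then have card_A: "card ?A = ?q ^ n - ?q ^ length L"
    by (simp add: card_cols_span[OF Suc.prems] card_carrier_vec)
  have "inj_on (\<lambda>(w, W). w # W) (SIGMA w:?A. indep_extensions n (L @ [w]) m)"
    by (auto simp: inj_on_def)
  then have "card (indep_extensions n L (Suc m)) = card (SIGMA w:?A. indep_extensions n (L @ [w]) m)"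
    unfolding indep_extensions_Suc[OF Suc.prems] by (rule card_image)
  also have "\<dots> = (\<Sum>w\<in>?A. card (indep_extensions n (L @ [w]) m))"
    by (rule card_SigmaI) (simp_all add: finite_indep_extensions)
  also have "\<dots> = (?q ^ n - ?q ^ length L) * (\<Prod>j\<in>{Suc (length L)..<Suc (length L) + m}. ?q ^ n - ?q ^ j)"
    by (simp add: IH card_A)
  also have "\<dots> = (\<Prod>j\<in>{length L..<length L + Suc m}. ?q ^ n - ?q ^ j)"
    by (subst prod.atLeast_Suc_lessThan) auto
  finally show ?case .
qed

lemma det_ne_0_iff_cols_indep:
  assumes "(P :: 'a::field mat) \<in> carrier_mat n n"
  shows "det P \<noteq> 0 \<longleftrightarrow> cols_indep n (cols P)"
proof -
  have "mat_of_cols n (cols P) = P" using assms mat_of_cols_cols[of P] by simp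
  moreover have "set (cols P) \<subseteq> carrier_vec n" using assms by (auto simp: cols_def)
  ultimately show ?thesis
    using det_0_iff_vec_prod_zero_field[OF assms] assms unfolding cols_indep_def by auto
qed

lemma GL_mats_first_cols_eq_image:
  assumes L: "cols_indep n L"
  shows "{P \<in> GL_mats n. \<forall>i<length L. col P i = L ! i} =
    (\<lambda>W. mat_of_cols n (L @ W)) ` indep_extensions n L (n - length L)"
proof (intro equalityI subsetI)
  have d: "length L \<le> n" by (rule cols_indep_length_le[OF L])
  fix P assume "P \<in> {P \<in> GL_mats n. \<forall>i<length L. col P i = L ! i}"
  then have P: "P \<in> carrier_mat n n" "det P \<noteq> 0" and PL: "\<forall>i<length L. col P i = L ! i"
    unfolding GL_mats_def by auto
  have cols: "cols P = L @ drop (length L) (cols P)"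
    using P PL d by (intro nth_equalityI) (auto simp: nth_append)
  have "P = mat_of_cols n (L @ drop (length L) (cols P))"
    using P mat_of_cols_cols[of P] by (simp flip: cols)
  moreover have "set (drop (length L) (cols P)) \<subseteq> carrier_vec n"
    using P set_drop_subset[of "length L" "cols P"] by (auto simp: cols_def)
  then have "drop (length L) (cols P) \<in> indep_extensions n L (n - length L)"
    using P det_ne_0_iff_cols_indep[OF P(1)] cols unfolding indep_extensions_def by auto
  ultimately show "P \<in> (\<lambda>W. mat_of_cols n (L @ W)) ` indep_extensions n L (n - length L)" by blast
next
  have d: "length L \<le> n" by (rule cols_indep_length_le[OF L])
  fix P assume "P \<in> (\<lambda>W. mat_of_cols n (L @ W)) ` indep_extensions n L (n - length L)"
  then obtain W where P: "P = mat_of_cols n (L @ W)" and W: "W \<in> indep_extensions n L (n - length L)"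
    by auto
  have carrier: "P \<in> carrier_mat n n" using P W d unfolding indep_extensions_def by auto
  have cols: "cols P = L @ W" using P L W unfolding indep_extensions_def cols_indep_def by auto
  have "col P i = L ! i" if "i < length L" for i
    using that carrier d cols by (metis cols_nth carrier_matD(2) nth_append less_le_trans)
  then show "P \<in> {P \<in> GL_mats n. \<forall>i<length L. col P i = L ! i}"
    using det_ne_0_iff_cols_indep[OF carrier] carrier cols W
    unfolding GL_mats_def indep_extensions_def by auto
qed

lemma card_GL_mats_first_cols:
  assumes L: "cols_indep n (L :: 'a::{finite,field} vec list)"
  shows "card {P \<in> GL_mats n. \<forall>i<length L. col P i = L ! i} = num_basis_completions (card (UNIV :: 'a set)) n (length L)"
proof -
  have "inj_on (\<lambda>W. mat_of_cols n (L @ W)) (indep_extensions n L (n - length L))"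
  proof (rule inj_onI)
    fix W1 W2 assume "W1 \<in> indep_extensions n L (n - length L)" "W2 \<in> indep_extensions n L (n - length L)"
      and "mat_of_cols n (L @ W1) = mat_of_cols n (L @ W2)"
    then have "cols (mat_of_cols n (L @ W1)) = cols (mat_of_cols n (L @ W2))" by simp
    then show "W1 = W2"
      using L \<open>W1 \<in> _\<close> \<open>W2 \<in> _\<close> unfolding indep_extensions_def cols_indep_def by auto
  qed
  then show ?thesis
    using card_indep_extensions[OF L] cols_indep_length_le[OF L]
    unfolding GL_mats_first_cols_eq_image[OF L] num_basis_completions_def by (simp add: card_image)
qed

lemma card_GL_mats: "card (GL_mats n :: 'a::{finite,field} mat set) = num_basis_completions (card (UNIV :: 'a set)) n 0"
  using card_GL_mats_first_cols[OF cols_indep_Nil, of n] by simp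

lemma finite_GL_mats[simp]: "finite (GL_mats n :: 'a::{finite,field} mat set)"
  unfolding GL_mats_def by (rule finite_subset[OF _ finite_carrier_mat[of n n]]) auto

lemma num_basis_completions_shift:
  assumes "d \<le> n"
  shows "num_basis_completions q n d = q ^ (d * (n - d)) * num_basis_completions q (n - d) 0"
proof -
  have "num_basis_completions q n d = (\<Prod>j\<in>{0 + d..<(n - d) + d}. q ^ n - q ^ j)"
    unfolding num_basis_completions_def using assms by simp
  also have "\<dots> = (\<Prod>i\<in>{0..<n - d}. q ^ n - q ^ (i + d))"
    by (rule prod.shift_bounds_nat_ivl)
  also have "\<dots> = (\<Prod>i\<in>{0..<n - d}. q ^ d * (q ^ (n - d) - q ^ i))"
  proof (rule prod.cong[OF refl])
    fix i
    have "q ^ n = q ^ d * q ^ (n - d)" using assms by (metis le_add_diff_inverse power_add)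
    moreover have "q ^ (i + d) = q ^ d * q ^ i" by (simp only: power_add mult.commute)
    ultimately show "q ^ n - q ^ (i + d) = q ^ d * (q ^ (n - d) - q ^ i)" by (simp only: diff_mult_distrib2)
  qed
  also have "\<dots> = q ^ (d * (n - d)) * num_basis_completions q (n - d) 0"
    by (simp add: prod.distrib num_basis_completions_def power_mult mult.commute)
  finally show ?thesis .
qed

lemma num_basis_completions_pos:
  assumes "q \<ge> 2"
  shows "num_basis_completions q n 0 > 0"
  unfolding num_basis_completions_def using assms by (intro prod_pos) (auto intro: power_strict_increasing)

section \<open>Companion matrices\<close>

(* Ones below the diagonal and the negated low coefficients of k in the last column, so that
   the first unit vector is cyclic: C e_j = e_(j+1) for j + 1 < d. *)
definition companion_mat :: "nat \<Rightarrow> 'a::comm_ring_1 poly \<Rightarrow> 'a mat" where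
  "companion_mat d k = mat d d (\<lambda>(i, j). if j = d - 1 then - coeff k i else if i = j + 1 then 1 else 0)"

lemma companion_mat_carrier[simp]: "companion_mat d k \<in> carrier_mat d d"
  unfolding companion_mat_def by simp

lemma companion_mat_index[simp]:
  "i < d \<Longrightarrow> j < d \<Longrightarrow>
    companion_mat d k $$ (i, j) = (if j = d - 1 then - coeff k i else if i = j + 1 then 1 else 0)"
  unfolding companion_mat_def by simp

lemma companion_mat_dim[simp]: "dim_row (companion_mat d k) = d" "dim_col (companion_mat d k) = d"
  unfolding companion_mat_def by simp_all

lemma char_poly_matrix_dim[simp]:
  "dim_row (char_poly_matrix A) = dim_row A" "dim_col (char_poly_matrix A) = dim_col A"
  unfolding char_poly_matrix_def by simp_all

lemma char_poly_matrix_index: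
  "A \<in> carrier_mat n n \<Longrightarrow> i < n \<Longrightarrow> j < n \<Longrightarrow>
    char_poly_matrix A $$ (i, j) = (if i = j then [:0, 1:] else 0) + [:- A $$ (i, j):]"
  unfolding char_poly_matrix_def by simp

lemma cofactor_char_poly_companion_0_0:
  "cofactor (char_poly_matrix (companion_mat (Suc d) (pCons a p))) 0 0 = char_poly (companion_mat d p)"
proof -
  have "mat_delete (char_poly_matrix (companion_mat (Suc d) (pCons a p))) 0 0 =
      char_poly_matrix (companion_mat d p)"
  proof (rule eq_matI)
    fix i j assume "i < dim_row (char_poly_matrix (companion_mat d p))"
      "j < dim_col (char_poly_matrix (companion_mat d p))"
    then show "mat_delete (char_poly_matrix (companion_mat (Suc d) (pCons a p))) 0 0 $$ (i, j) =
        char_poly_matrix (companion_mat d p) $$ (i, j)"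
      by (auto simp: mat_delete_def char_poly_matrix_index[OF companion_mat_carrier])
  qed (simp_all add: mat_delete_def)
  then show ?thesis by (simp add: cofactor_def char_poly_def)
qed

lemma cofactor_char_poly_companion_0_last:
  "cofactor (char_poly_matrix (companion_mat (Suc d) k)) 0 d = 1"
proof -
  let ?D = "mat_delete (char_poly_matrix (companion_mat (Suc d) k)) 0 d"
  have D: "?D \<in> carrier_mat d d" unfolding mat_delete_def by simp
  have D_index: "?D $$ (i, j) = (if j = Suc i then [:0, 1:] else 0) + (if i = j then [:- 1:] else 0)"
    if "i < d" "j < d" for i j
    using that by (auto simp: mat_delete_def char_poly_matrix_index[OF companion_mat_carrier])
  have triangular: "upper_triangular ?D" using D D_index unfolding upper_triangular_def by auto
  have diag: "diag_mat ?D = replicate d [:- 1:]"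
  proof (rule nth_equalityI)
    show "length (diag_mat ?D) = length (replicate d [:- 1:])" using D by (simp add: diag_mat_def)
    fix i assume "i < length (diag_mat ?D)"
    then show "diag_mat ?D ! i = replicate d [:- 1:] ! i" using D_index[of i i] D by (simp add: diag_mat_def)
  qed
  have "det ?D = prod_list (diag_mat ?D)" by (rule det_upper_triangular[OF triangular D])
  then have "det ?D = [:- 1:] ^ d" unfolding diag by simp
  also have "[:- 1:] = (- 1 :: 'a poly)" by (simp add: one_pCons)
  finally show ?thesis by (simp add: cofactor_def flip: power_add mult_2)
qed

lemma char_poly_companion_mat:
  assumes "degree k = d" "lead_coeff k = (1 :: 'a::comm_ring_1)"
  shows "char_poly (companion_mat d k) = k"
  using assms
proof (induction d arbitrary: k)
  case 0
  then have "k = 1" by (metis degree_0_id one_pCons)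
  then show ?case by (simp add: char_poly_def)
next
  case (Suc d)
  obtain a p where k: "k = pCons a p" by (cases k)
  have p: "degree p = d" "lead_coeff p = 1" using Suc.prems unfolding k by (auto split: if_splits)
  let ?M = "char_poly_matrix (companion_mat (Suc d) k)"
  have row0: "?M $$ (0, j) = (if j = 0 then [:0, 1:] else 0) + (if j = d then [:a:] else 0)"
    if "j < Suc d" for j
    using that by (auto simp: char_poly_matrix_index[OF companion_mat_carrier] k)
  have "char_poly (companion_mat (Suc d) k) = (\<Sum>j<Suc d. ?M $$ (0, j) * cofactor ?M 0 j)"
    unfolding char_poly_def by (rule laplace_expansion_row) auto
  also have "\<dots> = (\<Sum>j<Suc d. (if j = 0 then [:0, 1:] * cofactor ?M 0 j else 0) +
      (if j = d then [:a:] * cofactor ?M 0 j else 0))"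
    by (intro sum.cong) (auto simp: row0 distrib_right)
  also have "\<dots> = [:0, 1:] * cofactor ?M 0 0 + [:a:] * cofactor ?M 0 d"
    by (simp add: sum.distrib)
  also have "\<dots> = k"
    using Suc.IH[OF p] by (simp add: k cofactor_char_poly_companion_0_0 cofactor_char_poly_companion_0_last
        pCons_eq_iff mult_pCons_left)
  finally show ?case .
qed

section \<open>Krylov sequences\<close>

definition krylov_vec :: "'a::field mat \<Rightarrow> 'a vec \<Rightarrow> nat \<Rightarrow> 'a vec" where
  "krylov_vec M v i = ((\<lambda>u. M *\<^sub>v u) ^^ i) v"

definition krylov :: "'a::field mat \<Rightarrow> 'a vec \<Rightarrow> nat \<Rightarrow> 'a vec list" where
  "krylov M v d = map (krylov_vec M v) [0..<d]"

(* d is the dimension of the cyclic subspace spanned by v, M v, M^2 v, ... *)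
definition krylov_dim :: "nat \<Rightarrow> 'a::field mat \<Rightarrow> 'a vec \<Rightarrow> nat \<Rightarrow> bool" where
  "krylov_dim n M v d \<longleftrightarrow> cols_indep n (krylov M v d) \<and> krylov_vec M v d \<in> cols_span n (krylov M v d)"

lemma krylov_vec_0[simp]: "krylov_vec M v 0 = v"
  unfolding krylov_vec_def by simp

lemma krylov_vec_Suc: "krylov_vec M v (Suc i) = M *\<^sub>v krylov_vec M v i"
  unfolding krylov_vec_def by simp

lemma krylov_vec_carrier:
  "M \<in> carrier_mat n n \<Longrightarrow> v \<in> carrier_vec n \<Longrightarrow> krylov_vec M v i \<in> carrier_vec n"
  by (induction i) (auto simp: krylov_vec_Suc)

lemma length_krylov[simp]: "length (krylov M v d) = d"
  unfolding krylov_def by simp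

lemma nth_krylov[simp]: "i < d \<Longrightarrow> krylov M v d ! i = krylov_vec M v i"
  unfolding krylov_def by simp

lemma krylov_Suc: "krylov M v (Suc d) = krylov M v d @ [krylov_vec M v d]"
  unfolding krylov_def by simp

lemma cols_indep_krylov_mono:
  assumes "cols_indep n (krylov M v e)" "d \<le> e"
  shows "cols_indep n (krylov M v d)"
proof -
  have "krylov M v d = take d (krylov M v e)"
    using assms(2) by (simp add: krylov_def take_map)
  then show ?thesis
    using cols_indep_append_left[of n _ "drop d (krylov M v e)"] assms(1) by simp
qed

lemma cols_indep_krylovI:
  assumes M: "M \<in> carrier_mat n n" and v: "v \<in> carrier_vec n"
    and "\<And>j. j < d \<Longrightarrow> krylov_vec M v j \<notin> cols_span n (krylov M v j)"
  shows "cols_indep n (krylov M v d)"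
  using assms(3)
proof (induction d)
  case 0
  then show ?case by (simp add: krylov_def cols_indep_Nil)
next
  case (Suc d)
  then show ?case
    unfolding krylov_Suc by (intro cols_indep_snocI krylov_vec_carrier[OF M v]) auto
qed

lemma krylov_dim_exists:
  assumes M: "M \<in> carrier_mat n n" and v: "v \<in> carrier_vec n"
  obtains d where "d \<le> n" "krylov_dim n (M :: 'a::{finite,field} mat) v d"
proof -
  have "\<exists>d. krylov_vec M v d \<in> cols_span n (krylov M v d)"
  proof (rule ccontr)
    assume "\<nexists>d. krylov_vec M v d \<in> cols_span n (krylov M v d)"
    then have "cols_indep n (krylov M v (Suc n))" by (intro cols_indep_krylovI[OF M v]) auto
    then show False using cols_indep_length_le by fastforce
  qed
  then obtain d where d: "krylov_vec M v d \<in> cols_span n (krylov M v d)"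
    and least: "\<And>j. j < d \<Longrightarrow> krylov_vec M v j \<notin> cols_span n (krylov M v j)"
    using exists_least_iff[of "\<lambda>d. krylov_vec M v d \<in> cols_span n (krylov M v d)"] by blast
  have "cols_indep n (krylov M v d)" by (rule cols_indep_krylovI[OF M v least])
  then show ?thesis using that d cols_indep_length_le[of n "krylov M v d"] unfolding krylov_dim_def by auto
qed

lemma krylov_dim_unique:
  assumes M: "M \<in> carrier_mat n n" and v: "v \<in> carrier_vec n"
    and "krylov_dim n M v d" "krylov_dim n M v e"
  shows "d = e"
proof -
  have False if d: "krylov_dim n M v d" and e: "krylov_dim n M v e" and "d < e" for d e
  proof -
    have "cols_indep n (krylov M v d @ [krylov_vec M v d])"
      using cols_indep_krylov_mono[of n M v e "Suc d"] e \<open>d < e\<close>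
      unfolding krylov_dim_def krylov_Suc by auto
    then show False using d cols_indep_snoc_not_in_span unfolding krylov_dim_def by blast
  qed
  then show ?thesis using assms(3,4) by (metis linorder_neqE_nat)
qed

lemma krylov_vec_conj:
  assumes P: "P \<in> carrier_mat n n" and Q: "Q \<in> carrier_mat n n" and B: "B \<in> carrier_mat n n"
    and QP: "Q * P = 1\<^sub>m n" and u: "u \<in> carrier_vec n"
  shows "krylov_vec (P * B * Q) (P *\<^sub>v u) i = P *\<^sub>v krylov_vec B u i"
proof (induction i)
  case (Suc i)
  have Bu: "krylov_vec B u i \<in> carrier_vec n" by (rule krylov_vec_carrier[OF B u])
  have "krylov_vec (P * B * Q) (P *\<^sub>v u) (Suc i) = (P * B * Q) *\<^sub>v (P *\<^sub>v krylov_vec B u i)"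
    by (simp add: krylov_vec_Suc Suc.IH)
  also have "\<dots> = (P * B * Q * P) *\<^sub>v krylov_vec B u i"
    using P Q B Bu by (subst assoc_mult_mat_vec[symmetric, of _ n n P n]) auto
  also have "P * B * Q * P = P * B"
    using P Q B QP by (simp add: assoc_mult_mat[of _ n n _ n _ n])
  also have "(P * B) *\<^sub>v krylov_vec B u i = P *\<^sub>v krylov_vec B u (Suc i)"
    using P B Bu by (simp add: krylov_vec_Suc assoc_mult_mat_vec)
  finally show ?case .
qed simp

section \<open>The Krylov decomposition\<close>

definition inverse_mat :: "'a::field mat \<Rightarrow> 'a mat" where
  "inverse_mat P = inverse (det P) \<cdot>\<^sub>m adj_mat P"

lemma inverse_mat:
  assumes P: "P \<in> carrier_mat n n" and "det P \<noteq> 0"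
  shows "inverse_mat P \<in> carrier_mat n n" "P * inverse_mat P = 1\<^sub>m n" "inverse_mat P * P = 1\<^sub>m n"
proof -
  show "inverse_mat P \<in> carrier_mat n n" unfolding inverse_mat_def using adj_mat(1)[OF P] by simp
  have "P * inverse_mat P = inverse (det P) \<cdot>\<^sub>m (P * adj_mat P)"
    unfolding inverse_mat_def using P adj_mat(1)[OF P] by (simp add: mult_smult_distrib)
  then show "P * inverse_mat P = 1\<^sub>m n" unfolding adj_mat(2)[OF P] using assms(2) by (auto intro!: eq_matI)
  have "inverse_mat P * P = inverse (det P) \<cdot>\<^sub>m (adj_mat P * P)"
    unfolding inverse_mat_def using P adj_mat(1)[OF P] by (simp add: mult_smult_assoc_mat)
  then show "inverse_mat P * P = 1\<^sub>m n" unfolding adj_mat(3)[OF P] using assms(2) by (auto intro!: eq_matI)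
qed

lemma conj_mat_cancel:
  fixes P Q B :: "'a::comm_ring_1 mat"
  assumes P: "P \<in> carrier_mat n n" and Q: "Q \<in> carrier_mat n n" and B: "B \<in> carrier_mat n n"
    and QP: "Q * P = 1\<^sub>m n"
  shows "Q * (P * B * Q) * P = B"
proof -
  have "Q * (P * B * Q) * P = (Q * P) * B * (Q * P)"
    using P Q B by (simp add: assoc_mult_mat[of _ n n _ n _ n])
  then show ?thesis using B QP by simp
qed

lemma char_poly_four_block_zero:
  assumes A: "(A :: 'a::idom mat) \<in> carrier_mat n n" and B: "B \<in> carrier_mat n m"
    and D: "D \<in> carrier_mat m m"
  shows "char_poly (four_block_mat A B (0\<^sub>m m n) D) = char_poly A * char_poly D"
proof -
  let ?cm = "\<lambda>A. [:0, 1:] \<cdot>\<^sub>m 1\<^sub>m (dim_row A) + map_mat (\<lambda>a. [:- a:]) A"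
  have "?cm (four_block_mat A B (0\<^sub>m m n) D) =
      four_block_mat (?cm A) (map_mat (\<lambda>a. [:- a:]) B) (0\<^sub>m m n) (?cm D)"
    using A B D by (intro eq_matI) (auto simp: one_poly_def)
  also have "det \<dots> = det (?cm A) * det (?cm D)"
    using A B D by (intro det_four_block_mat_lower_left_zero[OF _ _ refl]) auto
  finally show ?thesis using A D unfolding char_poly_defs by simp
qed

definition companion_block :: "nat \<Rightarrow> nat \<Rightarrow> 'a::field poly \<Rightarrow> 'a mat \<Rightarrow> 'a mat \<Rightarrow> 'a mat" where
  "companion_block n d k X N = four_block_mat (companion_mat d k) X (0\<^sub>m (n - d) d) N"

lemma dim_companion_block:
  "dim_row (companion_block n d k X N) = d + dim_row N" "dim_col (companion_block n d k X N) = d + dim_col N"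
  unfolding companion_block_def by simp_all

context
  fixes n d :: nat and k :: "'a::field poly" and X N :: "'a mat"
  assumes d: "d \<le> n" and X: "X \<in> carrier_mat d (n - d)" and N: "N \<in> carrier_mat (n - d) (n - d)"
begin

lemma companion_block_carrier: "companion_block n d k X N \<in> carrier_mat n n"
  unfolding companion_block_def using d X N by auto

lemma companion_block_index:
  "i < n \<Longrightarrow> j < n \<Longrightarrow> companion_block n d k X N $$ (i, j) =
    (if i < d then if j < d then companion_mat d k $$ (i, j) else X $$ (i, j - d)
     else if j < d then 0 else N $$ (i - d, j - d))"
  unfolding companion_block_def using d X N by (subst index_mat_four_block) auto

lemma krylov_vec_companion_block:
  assumes "i < d"
  shows "krylov_vec (companion_block n d k X N) (unit_vec n 0) i = unit_vec n i"
    and "krylov_vec (companion_block n d k X N) (unit_vec n 0) (Suc i) =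
      vec n (\<lambda>r. if r < d then companion_mat d k $$ (r, i) else 0)"
proof -
  let ?B = "companion_block n d k X N"
  have dims: "dim_row ?B = n" "dim_col ?B = n" using companion_block_carrier by auto
  have col: "?B *\<^sub>v unit_vec n j = vec n (\<lambda>r. if r < d then companion_mat d k $$ (r, j) else 0)"
    if "j < d" for j
  proof -
    have "?B *\<^sub>v unit_vec n j = col ?B j"
      using that d by (intro mult_unit_vec_eq_col[OF companion_block_carrier]) auto
    also have "\<dots> = vec n (\<lambda>r. if r < d then companion_mat d k $$ (r, j) else 0)"
      using that d dims by (intro eq_vecI) (auto simp: companion_block_index)
    finally show ?thesis .
  qed
  show unit: "krylov_vec ?B (unit_vec n 0) i = unit_vec n i"
    using assms
  proof (induction i)
    case (Suc i)
    then show ?case using d by (auto simp: krylov_vec_Suc col intro!: eq_vecI)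
  qed simp
  show "krylov_vec ?B (unit_vec n 0) (Suc i) = vec n (\<lambda>r. if r < d then companion_mat d k $$ (r, i) else 0)"
    using assms by (simp add: krylov_vec_Suc unit col)
qed

lemma char_poly_companion_block:
  assumes "degree k = d" "lead_coeff k = 1"
  shows "char_poly (companion_block n d k X N) = k * char_poly N"
  unfolding companion_block_def
  using char_poly_four_block_zero[OF companion_mat_carrier X N] char_poly_companion_mat[OF assms]
  by simp

end

lemma companion_block_eq_split:
  assumes A: "A \<in> carrier_mat n n" and d: "d \<le> n"
    and left: "\<And>j. j < d \<Longrightarrow> col A j = vec n (\<lambda>i. if i < d then companion_mat d k $$ (i, j) else 0)"
  defines "X \<equiv> mat d (n - d) (\<lambda>(i, j). A $$ (i, j + d))"
    and "N \<equiv> mat (n - d) (n - d) (\<lambda>(i, j). A $$ (i + d, j + d))"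
  shows "A = companion_block n d k X N"
proof (rule eq_matI)
  fix i j assume "i < dim_row (companion_block n d k X N)" "j < dim_col (companion_block n d k X N)"
  then have ij: "i < n" "j < n" using d by (simp_all add: dim_companion_block N_def)
  have "A $$ (i, j) = col A j $ i" if "j < d" using A ij that by simp
  then show "A $$ (i, j) = companion_block n d k X N $$ (i, j)"
    using ij d left by (auto simp: companion_block_index[OF d] X_def N_def)
qed (use A d in \<open>auto simp: dim_companion_block N_def\<close>)

lemma companion_block_inj:
  assumes d: "d \<le> n" and X1: "X1 \<in> carrier_mat d (n - d)" and N1: "N1 \<in> carrier_mat (n - d) (n - d)"
    and X2: "X2 \<in> carrier_mat d (n - d)" and N2: "N2 \<in> carrier_mat (n - d) (n - d)"
    and k: "degree k1 = d" "lead_coeff k1 = 1" "degree k2 = d" "lead_coeff k2 = 1"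
    and eq: "companion_block n d k1 X1 N1 = companion_block n d k2 X2 N2"
  shows "k1 = k2 \<and> X1 = X2 \<and> N1 = N2"
proof (intro conjI)
  note index1 = companion_block_index[OF d X1 N1] and index2 = companion_block_index[OF d X2 N2]
  have entry: "companion_block n d k1 X1 N1 $$ (i, j) = companion_block n d k2 X2 N2 $$ (i, j)" for i j
    using eq by simp
  show "k1 = k2"
  proof (rule poly_eqI)
    fix i
    show "coeff k1 i = coeff k2 i"
    proof (cases "i < d")
      case True
      then show ?thesis using d entry[of i "d - 1"] by (simp add: index1 index2)
    next
      case False
      then show ?thesis using k by (cases "i = d") (auto simp: coeff_eq_0)
    qed
  qed
  show "X1 = X2"
  proof (rule eq_matI)
    fix i j assume "i < dim_row X2" "j < dim_col X2"
    then show "X1 $$ (i, j) = X2 $$ (i, j)" using entry[of i "j + d"] X1 X2 d by (simp add: index1 index2)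
  qed (use X1 X2 in auto)
  show "N1 = N2"
  proof (rule eq_matI)
    fix i j assume "i < dim_row N2" "j < dim_col N2"
    then show "N1 $$ (i, j) = N2 $$ (i, j)" using entry[of "i + d" "j + d"] N1 N2 d by (simp add: index1 index2)
  qed (use N1 N2 in auto)
qed

definition monic_divisors_deg :: "nat \<Rightarrow> 'a::field poly \<Rightarrow> 'a poly set" where
  "monic_divisors_deg d f = {k. monic_poly k \<and> degree k = d \<and> k dvd f}"

(* The first unit vector, or 0 if d = 0: then the Krylov space is trivial and v = 0. *)
definition start_vec :: "nat \<Rightarrow> nat \<Rightarrow> 'a::field vec" where
  "start_vec n d = (if d = 0 then 0\<^sub>v n else unit_vec n 0)"

lemma start_vec_carrier: "start_vec n d \<in> carrier_vec n"
  unfolding start_vec_def by simp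

definition block_data :: "nat \<Rightarrow> nat \<Rightarrow> 'a::{finite,field} poly \<Rightarrow> ('a mat \<times> 'a poly \<times> 'a mat \<times> 'a mat) set" where
  "block_data n d f = {(P, k, X, N). P \<in> GL_mats n \<and> k \<in> monic_divisors_deg d f \<and>
     X \<in> carrier_mat d (n - d) \<and> N \<in> carrier_mat (n - d) (n - d) \<and> char_poly N = f div k}"

definition krylov_frames :: "nat \<Rightarrow> nat \<Rightarrow> 'a::{finite,field} poly \<Rightarrow> ('a mat \<times> 'a vec \<times> 'a mat) set" where
  "krylov_frames n d f = {(M, v, P). M \<in> carrier_mat n n \<and> char_poly M = f \<and> v \<in> carrier_vec n \<and>
     krylov_dim n M v d \<and> P \<in> GL_mats n \<and> (\<forall>i<d. col P i = krylov_vec M v i)}"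

(* A triple (M, v, P) in krylov_frames n d f is recovered from P and the block form
   P^-1 M P = [C_k, X; 0, N], where C_k is the companion matrix of a monic divisor k of f of
   degree d and char_poly N = f div k. *)
definition frame_of_block_data ::
  "nat \<Rightarrow> nat \<Rightarrow> 'a::field mat \<times> 'a poly \<times> 'a mat \<times> 'a mat \<Rightarrow> 'a mat \<times> 'a vec \<times> 'a mat" where
  "frame_of_block_data n d =
    (\<lambda>(P, k, X, N). (P * companion_block n d k X N * inverse_mat P, P *\<^sub>v start_vec n d, P))"

(* If M^d v = (sum over i < d of y_i M^i v), this is x^d - (sum over i < d of y_i x^i). *)
definition krylov_relation_poly :: "nat \<Rightarrow> 'a::field vec \<Rightarrow> 'a poly" where
  "krylov_relation_poly d y = monom 1 d - (\<Sum>i<d. monom (y $ i) i)"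

lemma coeff_krylov_relation_poly:
  "coeff (krylov_relation_poly d y) i = (if i = d then 1 else if i < d then - y $ i else 0)"
  unfolding krylov_relation_poly_def by (auto simp: coeff_sum coeff_monom)

lemma degree_krylov_relation_poly: "degree (krylov_relation_poly d y) = d"
  by (rule antisym) (auto simp: coeff_krylov_relation_poly intro: degree_le le_degree)

lemma mat_of_cols_mult_vec_first_cols:
  assumes P: "P \<in> carrier_mat n n" and d: "d \<le> n" and y: "y \<in> carrier_vec d"
    and L: "length L = d" and cols: "\<And>i. i < d \<Longrightarrow> col P i = L ! i"
  shows "mat_of_cols n L *\<^sub>v y = P *\<^sub>v vec n (\<lambda>r. if r < d then y $ r else 0)"
proof (rule eq_vecI)
  fix s assume "s < dim_vec (P *\<^sub>v vec n (\<lambda>r. if r < d then y $ r else 0))"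
  then have s: "s < n" using P by simp
  have "(mat_of_cols n L *\<^sub>v y) $ s = (\<Sum>i<d. L ! i $ s * y $ i)"
    using mat_of_cols_mult_vec_index[of y L s n] y L s by simp
  also have "\<dots> = (\<Sum>i<d. P $$ (s, i) * y $ i)"
  proof (rule sum.cong)
    fix i assume "i \<in> {..<d}"
    then have "L ! i $ s = col P i $ s" using cols[of i] by simp
    also have "\<dots> = P $$ (s, i)" using P s d \<open>i \<in> {..<d}\<close> by simp
    finally show "L ! i $ s * y $ i = P $$ (s, i) * y $ i" by simp
  qed simp
  also have "\<dots> = (\<Sum>r\<in>{0..<n}. P $$ (s, r) * vec n (\<lambda>r. if r < d then y $ r else 0) $ r)"
    using d by (intro sum.mono_neutral_cong_left) auto
  also have "\<dots> = (P *\<^sub>v vec n (\<lambda>r. if r < d then y $ r else 0)) $ s"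
    using P s by (simp add: scalar_prod_def row_def)
  finally show "(mat_of_cols n L *\<^sub>v y) $ s = (P *\<^sub>v vec n (\<lambda>r. if r < d then y $ r else 0)) $ s" .
qed (use P in simp)

lemma krylov_dim_zero_vec: "krylov_dim n M (0\<^sub>v n) 0"
  unfolding krylov_dim_def by (simp add: krylov_def cols_indep_Nil cols_span_Nil)

lemma krylov_dim_conj_companion_block:
  fixes k :: "'a::{finite,field} poly"
  assumes d: "0 < d" "d \<le> n" and X: "X \<in> carrier_mat d (n - d)" and N: "N \<in> carrier_mat (n - d) (n - d)"
    and P: "P \<in> GL_mats n"
  defines "M \<equiv> P * companion_block n d k X N * inverse_mat P" and "v \<equiv> P *\<^sub>v unit_vec n 0"
  shows "krylov_dim n M v d \<and> (\<forall>i<d. col P i = krylov_vec M v i)"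
proof -
  let ?B = "companion_block n d k X N"
  have P_carrier: "P \<in> carrier_mat n n" and det: "det P \<noteq> 0" using P unfolding GL_mats_def by auto
  note Q = inverse_mat[OF P_carrier det]
  have krylov_M: "krylov_vec M v i = P *\<^sub>v krylov_vec ?B (unit_vec n 0) i" for i
    unfolding M_def v_def
    by (rule krylov_vec_conj[OF P_carrier Q(1) companion_block_carrier[OF d(2) X N] Q(3)]) simp
  have cols: "col P i = krylov_vec M v i" if "i < d" for i
    using krylov_M krylov_vec_companion_block(1)[OF d(2) X N that] mult_unit_vec_eq_col[OF P_carrier] that d
    by simp
  have "krylov M v d = take d (cols P)" using cols P_carrier d by (intro nth_equalityI) auto
  then have indep: "cols_indep n (krylov M v d)"
    using cols_indep_append_left[of n "take d (cols P)" "drop d (cols P)"] det_ne_0_iff_cols_indep[OF P_carrier] det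
    by simp
  define y where "y = vec d (\<lambda>r. - coeff k r)"
  obtain e where e: "d = Suc e" using d by (cases d) auto
  have "krylov_vec ?B (unit_vec n 0) d = vec n (\<lambda>r. if r < d then y $ r else 0)"
    using krylov_vec_companion_block(2)[OF d(2) X N, of e] e by (auto simp: y_def intro!: eq_vecI)
  then have "krylov_vec M v d = P *\<^sub>v vec n (\<lambda>r. if r < d then y $ r else 0)" by (simp add: krylov_M)
  also have "\<dots> = mat_of_cols n (krylov M v d) *\<^sub>v y"
    using cols by (intro mat_of_cols_mult_vec_first_cols[symmetric] P_carrier d(2)) (auto simp: y_def)
  finally have "krylov_vec M v d \<in> cols_span n (krylov M v d)" unfolding cols_span_def y_def by auto
  then show ?thesis using indep cols unfolding krylov_dim_def by auto
qed

lemma frame_of_block_data_mem: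
  assumes d: "d \<le> n" and s: "s \<in> block_data n d f"
  shows "frame_of_block_data n d s \<in> krylov_frames n d f"
proof -
  obtain P k X N where s_eq: "s = (P, k, X, N)" by (cases s)
  have P: "P \<in> GL_mats n" and k: "k \<in> monic_divisors_deg d f" and X: "X \<in> carrier_mat d (n - d)"
    and N: "N \<in> carrier_mat (n - d) (n - d)" and char_N: "char_poly N = f div k"
    using s unfolding s_eq block_data_def by auto
  have P_carrier: "P \<in> carrier_mat n n" and det: "det P \<noteq> 0" using P unfolding GL_mats_def by auto
  note Q = inverse_mat[OF P_carrier det]
  define M where "M = P * companion_block n d k X N * inverse_mat P"
  have M: "M \<in> carrier_mat n n"
    unfolding M_def by (rule mult_carrier_mat[OF mult_carrier_mat[OF P_carrier companion_block_carrier[OF d X N]] Q(1)])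
  have "similar_mat M (companion_block n d k X N)"
    using companion_block_carrier[OF d X N] Q P_carrier by (intro similar_matI) (auto simp: M_def)
  then have "char_poly M = char_poly (companion_block n d k X N)" by (rule char_poly_similar)
  also have "\<dots> = k * char_poly N"
    using k by (intro char_poly_companion_block[OF d X N]) (auto simp: monic_divisors_deg_def monic_poly_def)
  also have "\<dots> = f" using k char_N unfolding monic_divisors_deg_def by simp
  finally have char_M: "char_poly M = f" .
  have "krylov_dim n M (P *\<^sub>v start_vec n d) d \<and> (\<forall>i<d. col P i = krylov_vec M (P *\<^sub>v start_vec n d) i)"
  proof (cases "d = 0")
    case True
    have "P *\<^sub>v 0\<^sub>v n = 0\<^sub>v n" using P_carrier by (intro eq_vecI) (auto simp: scalar_prod_def)
    then show ?thesis using True krylov_dim_zero_vec by (simp add: start_vec_def)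
  next
    case False
    then show ?thesis using krylov_dim_conj_companion_block[OF _ d X N P] by (simp add: start_vec_def M_def)
  qed
  moreover have "P *\<^sub>v start_vec n d \<in> carrier_vec n"
    by (rule mult_mat_vec_carrier[OF P_carrier start_vec_carrier])
  ultimately show ?thesis
    using M char_M P unfolding s_eq frame_of_block_data_def krylov_frames_def M_def by auto
qed

lemma inverse_mat_mult_vec_cancel:
  assumes "P \<in> carrier_mat n n" "det P \<noteq> 0" "u \<in> carrier_vec n"
  shows "inverse_mat P *\<^sub>v (P *\<^sub>v u) = u"
  using inverse_mat[OF assms(1,2)] assms by (simp flip: assoc_mult_mat_vec[of _ n n P n])

lemma conj_krylov_frame_col:
  assumes r: "(M, v, P) \<in> krylov_frames n d f" and d: "d \<le> n" and j: "j < d"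
    and y: "y \<in> carrier_vec d" and Md: "krylov_vec M v d = mat_of_cols n (krylov M v d) *\<^sub>v y"
  shows "col (inverse_mat P * M * P) j = (if Suc j < d then unit_vec n (Suc j) else vec n (\<lambda>r. if r < d then y $ r else 0))"
proof -
  have M: "M \<in> carrier_mat n n" and v: "v \<in> carrier_vec n" and P: "P \<in> carrier_mat n n"
    and det: "det P \<noteq> 0" and cols: "\<And>i. i < d \<Longrightarrow> col P i = krylov_vec M v i"
    using r unfolding krylov_frames_def GL_mats_def by auto
  note Q = inverse_mat[OF P det]
  have P_unit: "P *\<^sub>v unit_vec n i = krylov_vec M v i" if "i < d" for i
    using mult_unit_vec_eq_col[OF P] cols that d by simp
  have next_vec: "krylov_vec M v (Suc j) =
      P *\<^sub>v (if Suc j < d then unit_vec n (Suc j) else vec n (\<lambda>r. if r < d then y $ r else 0))"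
  proof (cases "Suc j < d")
    case False
    then have "Suc j = d" using j by simp
    then show ?thesis using Md cols by (simp add: mat_of_cols_mult_vec_first_cols[OF P d y])
  qed (simp add: P_unit)
  have "col (inverse_mat P * M * P) j = (inverse_mat P * M * P) *\<^sub>v unit_vec n j"
    using Q M P j d by (intro mult_unit_vec_eq_col[symmetric]) auto
  also have "\<dots> = inverse_mat P *\<^sub>v (M *\<^sub>v (P *\<^sub>v unit_vec n j))"
    using Q M P by (simp add: assoc_mult_mat_vec[of _ n n _ n])
  also have "\<dots> = inverse_mat P *\<^sub>v krylov_vec M v (Suc j)"
    using P_unit j by (simp add: krylov_vec_Suc)
  finally show ?thesis unfolding next_vec using inverse_mat_mult_vec_cancel[OF P det] by simp
qed

lemma conj_krylov_frame_eq_companion_block: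
  assumes r: "(M, v, P) \<in> krylov_frames n d f" and d: "d \<le> n"
    and y: "y \<in> carrier_vec d" and Md: "krylov_vec M v d = mat_of_cols n (krylov M v d) *\<^sub>v y"
  defines "A \<equiv> inverse_mat P * M * P"
  shows "A = companion_block n d (krylov_relation_poly d y) (mat d (n - d) (\<lambda>(i, j). A $$ (i, j + d)))
    (mat (n - d) (n - d) (\<lambda>(i, j). A $$ (i + d, j + d)))"
proof (rule companion_block_eq_split[OF _ d])
  have M: "M \<in> carrier_mat n n" and P: "P \<in> carrier_mat n n" "det P \<noteq> 0"
    using r unfolding krylov_frames_def GL_mats_def by auto
  show "A \<in> carrier_mat n n"
    unfolding A_def by (rule mult_carrier_mat[OF mult_carrier_mat[OF inverse_mat(1)[OF P] M] P(1)])
  fix j assume "j < d"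
  then show "col A j = vec n (\<lambda>i. if i < d then companion_mat d (krylov_relation_poly d y) $$ (i, j) else 0)"
    unfolding A_def conj_krylov_frame_col[OF r d \<open>j < d\<close> y Md]
    using d by (auto simp: coeff_krylov_relation_poly intro!: eq_vecI)
qed

lemma start_vec_of_krylov_frame:
  assumes r: "(M, v, P) \<in> krylov_frames n d f" and d: "d \<le> n"
  shows "v = P *\<^sub>v start_vec n d"
proof (cases "d = 0")
  case True
  then have "v \<in> cols_span n []" using r unfolding krylov_frames_def krylov_dim_def by (simp add: krylov_def)
  moreover have "P *\<^sub>v 0\<^sub>v n = 0\<^sub>v n" using r unfolding krylov_frames_def GL_mats_def
    by (intro eq_vecI) (auto simp: scalar_prod_def)
  ultimately show ?thesis using True by (simp add: start_vec_def cols_span_Nil)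
next
  case False
  have "P \<in> carrier_mat n n" "col P 0 = v" using r False unfolding krylov_frames_def GL_mats_def by auto
  then show ?thesis using False d mult_unit_vec_eq_col[of P n n 0] by (simp add: start_vec_def)
qed

lemma frame_of_block_data_surj:
  assumes d: "d \<le> n" and r: "r \<in> krylov_frames n d f"
  shows "\<exists>s\<in>block_data n d f. frame_of_block_data n d s = r"
proof -
  obtain M v P where r_eq: "r = (M, v, P)" by (cases r)
  have r': "(M, v, P) \<in> krylov_frames n d f" using r unfolding r_eq .
  have M: "M \<in> carrier_mat n n" and char_M: "char_poly M = f" and P: "P \<in> GL_mats n"
    and P_carrier: "P \<in> carrier_mat n n" and det: "det P \<noteq> 0"
    using r' unfolding krylov_frames_def GL_mats_def by auto
  note Q = inverse_mat[OF P_carrier det]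
  obtain y where y: "y \<in> carrier_vec d" and Md: "krylov_vec M v d = mat_of_cols n (krylov M v d) *\<^sub>v y"
    using r' unfolding krylov_frames_def krylov_dim_def cols_span_def by auto
  define A where "A = inverse_mat P * M * P"
  define k where "k = krylov_relation_poly d y"
  define X where "X = mat d (n - d) (\<lambda>(i, j). A $$ (i, j + d))"
  define N where "N = mat (n - d) (n - d) (\<lambda>(i, j). A $$ (i + d, j + d))"
  have X: "X \<in> carrier_mat d (n - d)" and N: "N \<in> carrier_mat (n - d) (n - d)"
    unfolding X_def N_def by auto
  have A: "A = companion_block n d k X N"
    unfolding A_def k_def X_def N_def by (rule conj_krylov_frame_eq_companion_block[OF r' d y Md])
  have M_eq: "M = P * A * inverse_mat P"
    unfolding A_def by (rule conj_mat_cancel[OF Q(1) P_carrier M Q(2), symmetric])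
  have k_monic: "degree k = d" "lead_coeff k = 1"
    unfolding k_def by (simp_all add: degree_krylov_relation_poly coeff_krylov_relation_poly)
  have "similar_mat M A"
    using Q M P_carrier companion_block_carrier[OF d X N] M_eq A by (intro similar_matI) auto
  then have f: "f = k * char_poly N"
    using char_M char_poly_similar char_poly_companion_block[OF d X N k_monic] A by metis
  then have "(P, k, X, N) \<in> block_data n d f"
    using P X N k_monic unfolding block_data_def monic_divisors_deg_def monic_poly_def by auto
  moreover have "frame_of_block_data n d (P, k, X, N) = r"
    using M_eq A start_vec_of_krylov_frame[OF r' d] unfolding frame_of_block_data_def r_eq by simp
  ultimately show ?thesis by blast
qed

lemma frame_of_block_data_inj:
  assumes d: "d \<le> n"
  shows "inj_on (frame_of_block_data n d) (block_data n d (f :: 'a::{finite,field} poly))"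
proof (rule inj_onI)
  fix s1 s2 assume s1: "s1 \<in> block_data n d f" and s2: "s2 \<in> block_data n d f"
    and eq: "frame_of_block_data n d s1 = frame_of_block_data n d s2"
  obtain P1 k1 X1 N1 where s1_eq: "s1 = (P1, k1, X1, N1)" by (cases s1)
  obtain P2 k2 X2 N2 where s2_eq: "s2 = (P2, k2, X2, N2)" by (cases s2)
  have data: "P1 \<in> carrier_mat n n" "det P1 \<noteq> 0" "X1 \<in> carrier_mat d (n - d)"
    "N1 \<in> carrier_mat (n - d) (n - d)" "X2 \<in> carrier_mat d (n - d)" "N2 \<in> carrier_mat (n - d) (n - d)"
    "degree k1 = d" "lead_coeff k1 = 1" "degree k2 = d" "lead_coeff k2 = 1"
    using s1 s2 unfolding s1_eq s2_eq block_data_def GL_mats_def monic_divisors_deg_def monic_poly_def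
    by auto
  have P: "P2 = P1" using eq unfolding s1_eq s2_eq frame_of_block_data_def by simp
  note Q = inverse_mat[OF data(1,2)]
  have "P1 * companion_block n d k1 X1 N1 * inverse_mat P1 = P1 * companion_block n d k2 X2 N2 * inverse_mat P1"
    using eq unfolding s1_eq s2_eq frame_of_block_data_def P by simp
  then have "companion_block n d k1 X1 N1 = companion_block n d k2 X2 N2"
    using conj_mat_cancel[OF data(1) Q(1) companion_block_carrier[OF d data(3,4)] Q(3)]
      conj_mat_cancel[OF data(1) Q(1) companion_block_carrier[OF d data(5,6)] Q(3)] by metis
  then show "s1 = s2" using companion_block_inj[OF d data(3-10)] P unfolding s1_eq s2_eq by simp
qed

lemma bij_betw_frame_of_block_data:
  assumes "d \<le> n"
  shows "bij_betw (frame_of_block_data n d) (block_data n d f) (krylov_frames n d (f :: 'a::{finite,field} poly))"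
  unfolding bij_betw_def
  using frame_of_block_data_inj[OF assms] frame_of_block_data_mem[OF assms] frame_of_block_data_surj[OF assms]
  by blast

section \<open>Counting matrices with a given characteristic polynomial\<close>

definition char_poly_count :: "nat \<Rightarrow> 'a::{finite,field} poly \<Rightarrow> nat" where
  "char_poly_count n f = card {M \<in> carrier_mat n n. char_poly M = f}"

definition krylov_pairs :: "nat \<Rightarrow> nat \<Rightarrow> 'a::{finite,field} poly \<Rightarrow> ('a mat \<times> 'a vec) set" where
  "krylov_pairs n d f =
    {(M, v). M \<in> carrier_mat n n \<and> char_poly M = f \<and> v \<in> carrier_vec n \<and> krylov_dim n M v d}"

lemma finite_polys_degree_le: "finite {p :: 'a::{finite,zero} poly. degree p \<le> m}"
proof -
  have "{p :: 'a poly. degree p \<le> m} \<subseteq> Poly ` {xs. set xs \<subseteq> UNIV \<and> length xs = Suc m}"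
  proof
    fix p :: "'a poly" assume "p \<in> {p. degree p \<le> m}"
    then have "length (coeffs p) \<le> Suc m" by (cases "p = 0") (auto simp: length_coeffs)
    then have "Poly (coeffs p @ replicate (Suc m - length (coeffs p)) 0) = p"
      and "length (coeffs p @ replicate (Suc m - length (coeffs p)) 0) = Suc m"
      by (simp_all add: Poly_append_replicate_zero)
    then show "p \<in> Poly ` {xs. set xs \<subseteq> UNIV \<and> length xs = Suc m}"
      by (intro image_eqI[where x = "coeffs p @ replicate (Suc m - length (coeffs p)) 0"]) auto
  qed
  then show ?thesis by (rule finite_subset) (rule finite_imageI, rule finite_lists_length_eq, simp)
qed

lemma finite_monic_divisors_deg: "finite (monic_divisors_deg d (f :: 'a::{finite,field} poly))"
  by (rule finite_subset[OF _ finite_polys_degree_le[of d]]) (auto simp: monic_divisors_deg_def)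

lemma finite_char_poly_mats: "finite {M \<in> carrier_mat n n. char_poly M = (f :: 'a::{finite,field} poly)}"
  by (rule finite_subset[OF _ finite_carrier_mat[of n n]]) auto

lemma finite_krylov_pairs: "finite (krylov_pairs n d (f :: 'a::{finite,field} poly))"
  by (rule finite_subset[of _ "carrier_mat n n \<times> carrier_vec n"]) (auto simp: krylov_pairs_def)

lemma card_block_data:
  "card (block_data n d (f :: 'a::{finite,field} poly)) = card (GL_mats n :: 'a mat set) *
    (\<Sum>k\<in>monic_divisors_deg d f. card (UNIV :: 'a set) ^ (d * (n - d)) * char_poly_count (n - d) (f div k))"
proof -
  let ?S = "\<lambda>k. (carrier_mat d (n - d) :: 'a mat set) \<times> {N \<in> carrier_mat (n - d) (n - d). char_poly N = f div k}"
  have "block_data n d f = GL_mats n \<times> (SIGMA k:monic_divisors_deg d f. ?S k)"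
    unfolding block_data_def by auto
  moreover have "card (SIGMA k:monic_divisors_deg d f. ?S k) = (\<Sum>k\<in>monic_divisors_deg d f. card (?S k))"
    by (rule card_SigmaI) (simp_all add: finite_monic_divisors_deg finite_char_poly_mats)
  ultimately show ?thesis
    by (simp add: card_cartesian_product card_carrier_mat char_poly_count_def)
qed

lemma card_krylov_frames:
  "card (krylov_frames n d (f :: 'a::{finite,field} poly)) =
    card (krylov_pairs n d f) * num_basis_completions (card (UNIV :: 'a set)) n d"
proof -
  let ?F = "\<lambda>Mv. {P \<in> GL_mats n. \<forall>i<d. col P i = krylov_vec (fst Mv) (snd Mv) i}"
  have "krylov_frames n d f = (\<lambda>p. (fst (fst p), snd (fst p), snd p)) ` (SIGMA Mv:krylov_pairs n d f. ?F Mv)"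
    unfolding krylov_frames_def krylov_pairs_def by (auto simp: image_iff)
  moreover have "inj_on (\<lambda>p. (fst (fst p), snd (fst p), snd p)) (SIGMA Mv:krylov_pairs n d f. ?F Mv)"
    by (auto simp: inj_on_def)
  ultimately have "card (krylov_frames n d f) = card (SIGMA Mv:krylov_pairs n d f. ?F Mv)"
    by (simp add: card_image)
  also have "\<dots> = (\<Sum>Mv\<in>krylov_pairs n d f. card (?F Mv))"
    by (rule card_SigmaI) (auto simp: finite_krylov_pairs intro: finite_subset[OF _ finite_GL_mats])
  also have "\<dots> = (\<Sum>Mv\<in>krylov_pairs n d f. num_basis_completions (card (UNIV :: 'a set)) n d)"
  proof (rule sum.cong)
    fix Mv assume "Mv \<in> krylov_pairs n d f"
    then have "cols_indep n (krylov (fst Mv) (snd Mv) d)" unfolding krylov_pairs_def krylov_dim_def by auto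
    then show "card (?F Mv) = num_basis_completions (card (UNIV :: 'a set)) n d"
      using card_GL_mats_first_cols[of n "krylov (fst Mv) (snd Mv) d"] by simp
  qed simp
  finally show ?thesis by simp
qed

lemma card_krylov_pairs:
  assumes "d \<le> n"
  shows "card (krylov_pairs n d (f :: 'a::{finite,field} poly)) * num_basis_completions (card (UNIV :: 'a set)) (n - d) 0 =
    num_basis_completions (card (UNIV :: 'a set)) n 0 * (\<Sum>k\<in>monic_divisors_deg d f. char_poly_count (n - d) (f div k))"
proof -
  let ?q = "card (UNIV :: 'a set)"
  have "?q ^ (d * (n - d)) * (card (krylov_pairs n d f) * num_basis_completions ?q (n - d) 0) =
      card (krylov_frames n d f)"
    using card_krylov_frames[of n d f] num_basis_completions_shift[OF assms] by simp
  also have "\<dots> = card (block_data n d f)"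
    by (rule bij_betw_same_card[OF bij_betw_frame_of_block_data[OF assms], symmetric])
  also have "\<dots> = ?q ^ (d * (n - d)) * (num_basis_completions ?q n 0 *
      (\<Sum>k\<in>monic_divisors_deg d f. char_poly_count (n - d) (f div k)))"
    by (simp add: card_block_data card_GL_mats sum_distrib_left ac_simps)
  finally show ?thesis by (simp add: finite_UNIV_card_ge_0)
qed

lemma sum_card_krylov_pairs:
  "(\<Sum>d\<le>n. card (krylov_pairs n d (f :: 'a::{finite,field} poly))) = char_poly_count n f * card (UNIV :: 'a set) ^ n"
proof -
  have "(\<Union>d\<le>n. krylov_pairs n d f) = {M \<in> carrier_mat n n. char_poly M = f} \<times> (carrier_vec n :: 'a vec set)"
  proof (intro equalityI subsetI)
    fix x assume "x \<in> {M \<in> carrier_mat n n. char_poly M = f} \<times> (carrier_vec n :: 'a vec set)"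
    then obtain M v where x: "x = (M, v)" and M: "M \<in> carrier_mat n n" "char_poly M = f"
      and v: "v \<in> carrier_vec n" by auto
    obtain d where "d \<le> n" "krylov_dim n M v d" using krylov_dim_exists[OF M(1) v] by blast
    then show "x \<in> (\<Union>d\<le>n. krylov_pairs n d f)" using x M v unfolding krylov_pairs_def by auto
  qed (auto simp: krylov_pairs_def)
  moreover have "krylov_pairs n d1 f \<inter> krylov_pairs n d2 f = {}" if "d1 \<noteq> d2" for d1 d2
  proof -
    have False if "(M, v) \<in> krylov_pairs n d1 f" "(M, v) \<in> krylov_pairs n d2 f" for M v
      using that krylov_dim_unique[of M n v d1 d2] \<open>d1 \<noteq> d2\<close> unfolding krylov_pairs_def by auto
    then show ?thesis by auto
  qed
  then have "card (\<Union>d\<le>n. krylov_pairs n d f) = (\<Sum>d\<le>n. card (krylov_pairs n d f))"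
    by (intro card_UN_disjoint) (auto simp: finite_krylov_pairs)
  ultimately show ?thesis by (simp add: card_cartesian_product char_poly_count_def card_carrier_vec)
qed

definition monic_divisors :: "'a::field poly \<Rightarrow> 'a poly set" where
  "monic_divisors f = {g. monic_poly g \<and> g dvd f}"

definition P_mat :: "'a::{finite,field} poly \<Rightarrow> real" where
  "P_mat f = real (char_poly_count (degree f) f) / real (num_basis_completions (card (UNIV :: 'a set)) (degree f) 0)"

lemma monic_poly_degree_0: "monic_poly g \<Longrightarrow> degree g = 0 \<Longrightarrow> g = 1"
  unfolding monic_poly_def using degree_0_id[of g] by (simp add: one_pCons)

lemma monic_mult_div:
  assumes "monic_poly f" "g \<in> monic_divisors f"
  shows "f div g \<in> monic_divisors f" "f div (f div g) = g" "g * (f div g) = f"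
proof -
  have g: "lead_coeff g = 1" "g dvd f" and f: "lead_coeff f = 1"
    using assms unfolding monic_divisors_def monic_poly_def by auto
  show fg: "g * (f div g) = f" using g by simp
  have lc: "lead_coeff (f div g) = 1" using lead_coeff_mult[of g "f div g"] fg f g by simp
  moreover have "f div g dvd f" using fg dvd_triv_right[of "f div g" g] by simp
  ultimately show "f div g \<in> monic_divisors f" unfolding monic_divisors_def monic_poly_def by simp
  have "f div g \<noteq> 0" using lc by auto
  then show "f div (f div g) = g" using nonzero_mult_div_cancel_right[of "f div g" g] fg by simp
qed

lemma sum_monic_divisors_div:
  assumes "monic_poly f"
  shows "(\<Sum>g\<in>monic_divisors f. h (f div g)) = (\<Sum>g\<in>monic_divisors f. h g)"
  by (rule sum.reindex_bij_witness[where i = "\<lambda>g. f div g" and j = "\<lambda>g. f div g"])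
    (auto simp: monic_mult_div[OF assms])

lemma finite_monic_divisors:
  assumes "(f :: 'a::{finite,field} poly) \<noteq> 0"
  shows "finite (monic_divisors f)"
  by (rule finite_subset[OF _ finite_polys_degree_le[of "degree f"]])
    (auto simp: monic_divisors_def dvd_imp_degree_le assms)

lemma sum_monic_divisors_by_degree:
  assumes "(f :: 'a::{finite,field} poly) \<noteq> 0"
  shows "(\<Sum>g\<in>monic_divisors f. h g) = (\<Sum>d\<le>degree f. \<Sum>g\<in>monic_divisors_deg d f. h g)"
proof -
  have "monic_divisors f = (\<Union>d\<le>degree f. monic_divisors_deg d f)"
    unfolding monic_divisors_def monic_divisors_deg_def using dvd_imp_degree_le[OF _ assms] by auto
  then show ?thesis
    by (simp only:) (rule sum.UNION_disjoint, simp_all add: finite_monic_divisors_deg,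
        auto simp: monic_divisors_deg_def)
qed

lemma P_mat_krylov_pairs:
  assumes f: "monic_poly (f :: 'a::{finite,field} poly)" and d: "d \<le> degree f"
  shows "real (card (krylov_pairs (degree f) d f)) / real (num_basis_completions (card (UNIV :: 'a set)) (degree f) 0) =
    (\<Sum>k\<in>monic_divisors_deg d f. P_mat (f div k))"
proof -
  let ?g = "\<lambda>m. real (num_basis_completions (card (UNIV :: 'a set)) m 0)"
  have pos: "?g m > 0" for m using num_basis_completions_pos[OF card_UNIV_field_ge_2] by simp
  have "real (card (krylov_pairs (degree f) d f)) * ?g (degree f - d) =
      (\<Sum>k\<in>monic_divisors_deg d f. real (char_poly_count (degree f - d) (f div k))) * ?g (degree f)"
    unfolding of_nat_sum[symmetric] of_nat_mult[symmetric] card_krylov_pairs[OF d] by (simp only: mult.commute)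
  then have "real (card (krylov_pairs (degree f) d f)) / ?g (degree f) =
      (\<Sum>k\<in>monic_divisors_deg d f. real (char_poly_count (degree f - d) (f div k))) / ?g (degree f - d)"
    using pos[of "degree f"] pos[of "degree f - d"] by (simp only: frac_eq_eq less_irrefl)
  also have "\<dots> = (\<Sum>k\<in>monic_divisors_deg d f. real (char_poly_count (degree f - d) (f div k)) / ?g (degree f - d))"
    by (rule sum_divide_distrib)
  also have "\<dots> = (\<Sum>k\<in>monic_divisors_deg d f. P_mat (f div k))"
  proof (rule sum.cong)
    fix k assume k: "k \<in> monic_divisors_deg d f"
    then have fk: "k * (f div k) = f" and k0: "k \<noteq> 0"
      unfolding monic_divisors_deg_def monic_poly_def by auto
    then have "f div k \<noteq> 0" using f unfolding monic_poly_def by auto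
    then have "degree (k * (f div k)) = degree k + degree (f div k)" by (rule degree_mult_eq[OF k0])
    then have "degree f = d + degree (f div k)" using fk k unfolding monic_divisors_deg_def by simp
    then show "real (char_poly_count (degree f - d) (f div k)) / ?g (degree f - d) = P_mat (f div k)"
      unfolding P_mat_def by simp
  qed simp
  finally show ?thesis .
qed

theorem P_mat_divisor_sum:
  assumes f: "monic_poly (f :: 'a::{finite,field} poly)"
  shows "real (card (UNIV :: 'a set)) ^ degree f * P_mat f = (\<Sum>h\<in>monic_divisors f. P_mat h)"
proof -
  let ?n = "degree f" and ?q = "card (UNIV :: 'a set)"
  have f0: "f \<noteq> 0" using f unfolding monic_poly_def by auto
  have "real ?q ^ ?n * P_mat f =
      real (\<Sum>d\<le>?n. card (krylov_pairs ?n d f)) / real (num_basis_completions ?q ?n 0)"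
    unfolding sum_card_krylov_pairs P_mat_def by (simp add: ac_simps)
  also have "\<dots> = (\<Sum>d\<le>?n. \<Sum>k\<in>monic_divisors_deg d f. P_mat (f div k))"
    by (simp add: sum_divide_distrib P_mat_krylov_pairs[OF f])
  also have "\<dots> = (\<Sum>k\<in>monic_divisors f. P_mat (f div k))"
    by (rule sum_monic_divisors_by_degree[OF f0, symmetric])
  also have "\<dots> = (\<Sum>h\<in>monic_divisors f. P_mat h)"
    by (rule sum_monic_divisors_div[OF f])
  finally show ?thesis .
qed

lemma char_poly_count_0_1: "char_poly_count 0 (1 :: 'a::{finite,field} poly) = 1"
proof -
  have "{M \<in> carrier_mat 0 0. char_poly M = (1 :: 'a poly)} = carrier_mat 0 0"
    by (auto simp: char_poly_def)
  then show ?thesis by (simp add: char_poly_count_def card_carrier_mat)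
qed

lemma P_mat_1: "P_mat (1 :: 'a::{finite,field} poly) = 1"
  by (simp add: P_mat_def char_poly_count_0_1 num_basis_completions_def)

lemma det_ne_0_iff_poly_char_poly:
  assumes "(A :: 'a::field mat) \<in> carrier_mat n n"
  shows "det A \<noteq> 0 \<longleftrightarrow> poly (char_poly A) 0 \<noteq> 0"
proof -
  have "char_matrix A 0 = A" unfolding char_matrix_def using assms by (intro eq_matI) auto
  then show ?thesis using eigenvalue_det[OF assms, of 0] eigenvalue_root_char_poly[OF assms, of 0] by simp
qed

lemma P_GL_eq_P_mat:
  assumes "poly (f :: 'a::{finite,field} poly) 0 \<noteq> 0"
  shows "P_GL f = P_mat f"
proof (cases "f = 1")
  case False
  have "{M \<in> GL_mats (degree f). char_poly M = f} = {M \<in> carrier_mat (degree f) (degree f). char_poly M = f}"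
    unfolding GL_mats_def using det_ne_0_iff_poly_char_poly assms by auto
  then show ?thesis using False unfolding P_GL_def P_mat_def char_poly_count_def card_GL_mats by simp
qed (simp add: P_GL_def P_mat_1)

lemma P_GL_eq_0:
  assumes "poly f 0 = 0"
  shows "P_GL f = 0"
proof -
  have "{M \<in> GL_mats (degree f). char_poly M = f} = {}"
    unfolding GL_mats_def using det_ne_0_iff_poly_char_poly assms by auto
  moreover have "f \<noteq> 1" using assms by auto
  ultimately show ?thesis unfolding P_GL_def by simp
qed

section \<open>Dirichlet convolution over monic polynomials\<close>

lemma monic_poly_mult: "monic_poly g \<Longrightarrow> monic_poly h \<Longrightarrow> monic_poly (g * h)"
  unfolding monic_poly_def by (simp add: lead_coeff_mult)

lemma dconv_not_monic:
  assumes "\<not> monic_poly f"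
  shows "dconv \<alpha> \<beta> f = 0"
proof -
  have empty: "{(g, h). monic_poly g \<and> monic_poly h \<and> g * h = f} = {}" using assms monic_poly_mult by auto
  show ?thesis unfolding dconv_def empty by simp
qed

lemma dconv_pairs_eq_image:
  assumes "monic_poly f"
  shows "{(g, h). monic_poly g \<and> monic_poly h \<and> g * h = f} = (\<lambda>g. (g, f div g)) ` monic_divisors f"
proof (intro equalityI subsetI)
  fix x assume "x \<in> {(g, h). monic_poly g \<and> monic_poly h \<and> g * h = f}"
  then obtain g h where x: "x = (g, h)" and g: "monic_poly g" "monic_poly h" "g * h = f" by auto
  then have "g \<noteq> 0" unfolding monic_poly_def by auto
  then show "x \<in> (\<lambda>g. (g, f div g)) ` monic_divisors f"
    using g unfolding x monic_divisors_def by auto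
qed (use monic_mult_div[OF assms] in \<open>auto simp: monic_divisors_def\<close>)

lemma finite_dconv_pairs: "finite {(g, h). monic_poly g \<and> monic_poly h \<and> g * h = (f :: 'a::{finite,field} poly)}"
proof (cases "monic_poly f")
  case True
  then have "f \<noteq> 0" unfolding monic_poly_def by auto
  then show ?thesis unfolding dconv_pairs_eq_image[OF True] by (simp add: finite_monic_divisors)
next
  case False
  then show ?thesis using monic_poly_mult by (auto intro: finite_subset[of _ "{}"])
qed

lemma dconv_eq_sum_monic_divisors:
  assumes "monic_poly f"
  shows "dconv \<alpha> \<beta> f = (\<Sum>g\<in>monic_divisors f. \<alpha> g * \<beta> (f div g))"
proof -
  have "inj_on (\<lambda>g. (g, f div g)) (monic_divisors f)" by (auto simp: inj_on_def)
  then show ?thesis unfolding dconv_def dconv_pairs_eq_image[OF assms] by (simp add: sum.reindex)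
qed

lemma dconv_unit_left:
  "dconv (\<lambda>f. if f = 1 then 1 else 0) \<alpha> f = (if monic_poly f then \<alpha> f else 0)"
proof (cases "monic_poly f")
  case True
  then have "finite (monic_divisors f)" by (intro finite_monic_divisors) (auto simp: monic_poly_def)
  moreover have "1 \<in> monic_divisors f" unfolding monic_divisors_def monic_poly_def by simp
  moreover have "dconv (\<lambda>f. if f = 1 then 1 else 0) \<alpha> f = (\<Sum>g\<in>monic_divisors f. if g = 1 then \<alpha> f else 0)"
    unfolding dconv_eq_sum_monic_divisors[OF True] by (intro sum.cong) auto
  ultimately show ?thesis using True by simp
qed (simp add: dconv_not_monic)

lemma dconv_unit_right:
  "dconv \<alpha> (\<lambda>f. if f = 1 then 1 else 0) f = (if monic_poly f then \<alpha> f else 0)"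
proof (cases "monic_poly f")
  case True
  have f0: "f \<noteq> 0" using True unfolding monic_poly_def by auto
  have "dconv \<alpha> (\<lambda>f. if f = 1 then 1 else 0) f = (\<Sum>g\<in>monic_divisors f. if g = f then \<alpha> f else 0)"
    unfolding dconv_eq_sum_monic_divisors[OF True]
  proof (intro sum.cong refl)
    fix g assume "g \<in> monic_divisors f"
    then have "f div g = 1 \<longleftrightarrow> g = f"
      using monic_mult_div(3)[OF True] f0 by (metis div_self mult.right_neutral)
    then show "\<alpha> g * (if f div g = 1 then 1 else 0) = (if g = f then \<alpha> f else 0)" by auto
  qed
  moreover have "f \<in> monic_divisors f" using True unfolding monic_divisors_def by simp
  ultimately show ?thesis using True finite_monic_divisors[OF f0] by simp
qed (simp add: dconv_not_monic)

lemma dconv_assoc: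
  fixes f :: "'a::{finite,field} poly"
  shows "dconv (dconv \<alpha> \<beta>) \<gamma> f = dconv \<alpha> (dconv \<beta> \<gamma>) f"
proof -
  let ?D = "\<lambda>f :: 'a poly. {(g, h). monic_poly g \<and> monic_poly h \<and> g * h = f}"
  let ?T = "{(a, b, c). monic_poly a \<and> monic_poly b \<and> monic_poly c \<and> a * b * c = f}"
  have fin: "finite (?D x)" for x by (rule finite_dconv_pairs)
  have "dconv (dconv \<alpha> \<beta>) \<gamma> f = (\<Sum>p\<in>?D f. \<Sum>q\<in>?D (fst p). \<alpha> (fst q) * \<beta> (snd q) * \<gamma> (snd p))"
    unfolding dconv_def by (simp add: split_def sum_distrib_right)
  also have "\<dots> = (\<Sum>(p, q)\<in>(SIGMA p:?D f. ?D (fst p)). \<alpha> (fst q) * \<beta> (snd q) * \<gamma> (snd p))"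
    by (rule sum.Sigma) (simp_all add: fin)
  also have "\<dots> = (\<Sum>(a, b, c)\<in>?T. \<alpha> a * \<beta> b * \<gamma> c)"
    by (rule sum.reindex_bij_witness[where i = "\<lambda>(a, b, c). ((a * b, c), (a, b))"
        and j = "\<lambda>((x, c), (a, b)). (a, b, c)"]) (auto simp: monic_poly_mult)
  also have "\<dots> = (\<Sum>(p, q)\<in>(SIGMA p:?D f. ?D (snd p)). \<alpha> (fst p) * (\<beta> (fst q) * \<gamma> (snd q)))"
    by (rule sum.reindex_bij_witness[where i = "\<lambda>((a, x), (b, c)). (a, b, c)"
        and j = "\<lambda>(a, b, c). ((a, b * c), (b, c))"]) (auto simp: monic_poly_mult mult.assoc)
  also have "\<dots> = (\<Sum>p\<in>?D f. \<Sum>q\<in>?D (snd p). \<alpha> (fst p) * (\<beta> (fst q) * \<gamma> (snd q)))"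
    by (rule sum.Sigma[symmetric]) (simp_all add: fin)
  also have "\<dots> = dconv \<alpha> (dconv \<beta> \<gamma>) f"
    unfolding dconv_def by (simp add: split_def sum_distrib_left)
  finally show ?thesis .
qed

lemma dconv_mult_multiplicative:
  assumes "\<And>g h. monic_poly g \<Longrightarrow> monic_poly h \<Longrightarrow> w (g * h) = w g * w h"
  shows "dconv (\<lambda>g. \<alpha> g * w g) (\<lambda>h. \<beta> h * w h) f = dconv \<alpha> \<beta> f * w f"
proof -
  have "\<alpha> g * w g * (\<beta> h * w h) = \<alpha> g * \<beta> h * w f"
    if "monic_poly g" "monic_poly h" "g * h = f" for g h
    using assms[OF that(1,2)] that(3) by (simp add: ac_simps)
  then show ?thesis unfolding dconv_def sum_distrib_right by (intro sum.cong) auto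
qed

lemma poly_norm_mult:
  assumes "monic_poly g" "monic_poly h"
  shows "poly_norm (g * h) = poly_norm g * poly_norm h"
proof -
  have "g \<noteq> 0" "h \<noteq> 0" using assms unfolding monic_poly_def by auto
  then show ?thesis unfolding poly_norm_def by (simp add: degree_mult_eq power_add)
qed

lemma poly_norm_gt_1:
  assumes "degree (g :: 'a::{finite,field} poly) > 0"
  shows "poly_norm g > 1"
  unfolding poly_norm_def using card_UNIV_field_ge_2[where 'a = 'a] assms by (simp add: one_less_power)

lemma alpha_GL_Suc: "alpha_GL (Suc i) = (\<lambda>g. alpha_GL i g * inverse (poly_norm g))"
  unfolding alpha_GL_def by (simp add: fun_eq_iff mult.commute)

(* alpha_GL 0, which the paper does not use, is the indicator of g(0) <> 0. *)
lemma conv_alpha_GL_Suc: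
  fixes f :: "'a::{finite,field} poly"
  shows "conv_alpha_GL (Suc k) f = dconv (alpha_GL 0) (conv_alpha_GL k) f * inverse (poly_norm f)"
proof (induction k arbitrary: f)
  case 0
  show ?case by (simp add: dconv_unit_left dconv_unit_right alpha_GL_Suc)
next
  case (Suc k)
  have IH: "conv_alpha_GL (Suc k) = (\<lambda>f :: 'a poly. dconv (alpha_GL 0) (conv_alpha_GL k) f * inverse (poly_norm f))"
    by (rule ext) (rule Suc.IH)
  have "conv_alpha_GL (Suc (Suc k)) f = dconv (conv_alpha_GL (Suc k)) (alpha_GL (Suc (Suc k))) f" by simp
  also have "\<dots> = dconv (\<lambda>f. dconv (alpha_GL 0) (conv_alpha_GL k) f * inverse (poly_norm f))
      (\<lambda>g. alpha_GL (Suc k) g * inverse (poly_norm g)) f"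
    unfolding IH alpha_GL_Suc[of "Suc k"] ..
  also have "\<dots> = dconv (dconv (alpha_GL 0) (conv_alpha_GL k)) (alpha_GL (Suc k)) f * inverse (poly_norm f)"
    by (rule dconv_mult_multiplicative) (simp add: poly_norm_mult)
  also have "\<dots> = dconv (alpha_GL 0) (conv_alpha_GL (Suc k)) f * inverse (poly_norm f)"
    by (simp add: dconv_assoc)
  finally show ?case .
qed

lemma poly_0_monic_divisor:
  assumes "monic_poly f" "g \<in> monic_divisors f"
  shows "poly f 0 = poly g 0 * poly (f div g) 0"
  using monic_mult_div(3)[OF assms] by (metis poly_mult)

lemma conv_alpha_GL_eq_0:
  assumes "monic_poly f" "poly f 0 = 0"
  shows "conv_alpha_GL k f = 0"
  using assms
proof (induction k arbitrary: f)
  case (Suc k)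
  have "alpha_GL 0 g * conv_alpha_GL k (f div g) = 0" if "g \<in> monic_divisors f" for g
    using poly_0_monic_divisor[OF Suc.prems(1) that] Suc.prems(2) Suc.IH monic_mult_div(1)[OF Suc.prems(1) that]
    unfolding alpha_GL_def monic_divisors_def by auto
  then have "dconv (alpha_GL 0) (conv_alpha_GL k) f = 0"
    unfolding dconv_eq_sum_monic_divisors[OF Suc.prems(1)] by (intro sum.neutral) auto
  then show ?case by (simp only: conv_alpha_GL_Suc mult_zero_left)
qed auto

lemma conv_alpha_GL_Suc_unit:
  assumes f: "monic_poly f" and f0: "poly f 0 \<noteq> 0"
  shows "conv_alpha_GL (Suc k) f = (\<Sum>h\<in>monic_divisors f. conv_alpha_GL k h) / poly_norm f"
proof -
  have "alpha_GL 0 g = 1" if "g \<in> monic_divisors f" for g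
    using poly_0_monic_divisor[OF f that] f0 unfolding alpha_GL_def by auto
  then have "dconv (alpha_GL 0) (conv_alpha_GL k) f = (\<Sum>g\<in>monic_divisors f. conv_alpha_GL k (f div g))"
    unfolding dconv_eq_sum_monic_divisors[OF f] by simp
  also have "\<dots> = (\<Sum>h\<in>monic_divisors f. conv_alpha_GL k h)" by (rule sum_monic_divisors_div[OF f])
  finally show ?thesis by (simp only: conv_alpha_GL_Suc divide_inverse)
qed

section \<open>The limit\<close>

lemma affine_recursion_bound:
  fixes y e :: "nat \<Rightarrow> real"
  assumes Q: "Q > 1" and rec: "\<And>k. y (Suc k) = (y k + e k) / Q" and e: "\<And>k. k \<ge> K \<Longrightarrow> \<bar>e k\<bar> \<le> \<epsilon>"
  shows "\<bar>y (K + m)\<bar> \<le> \<bar>y K\<bar> / Q ^ m + \<epsilon> / (Q - 1)"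
proof (induction m)
  case 0
  have "\<epsilon> \<ge> 0" using e[of K] by simp
  then show ?case using Q by simp
next
  case (Suc m)
  have "\<bar>y (K + Suc m)\<bar> \<le> (\<bar>y (K + m)\<bar> + \<bar>e (K + m)\<bar>) / Q"
    using Q rec[of "K + m"] by (simp add: divide_right_mono abs_triangle_ineq)
  also have "\<dots> \<le> (\<bar>y K\<bar> / Q ^ m + \<epsilon> / (Q - 1) + \<epsilon>) / Q"
    using Suc.IH e[of "K + m"] Q by (intro divide_right_mono) auto
  also have "\<dots> = \<bar>y K\<bar> / Q ^ Suc m + \<epsilon> / (Q - 1)"
    using Q by (simp add: field_simps)
  finally show ?case .
qed

lemma affine_recursion_tendsto_0:
  fixes y e :: "nat \<Rightarrow> real"
  assumes Q: "Q > 1" and rec: "\<And>k. y (Suc k) = (y k + e k) / Q" and e: "e \<longlonglongrightarrow> 0"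
  shows "y \<longlonglongrightarrow> 0"
proof (rule LIMSEQ_I)
  fix r :: real assume r: "r > 0"
  then have "r * (Q - 1) / 2 > 0" using Q by simp
  then obtain K where K: "\<And>k. k \<ge> K \<Longrightarrow> \<bar>e k\<bar> \<le> r * (Q - 1) / 2"
    using LIMSEQ_D[OF e] by (metis diff_zero less_imp_le real_norm_def)
  have "(\<lambda>m. \<bar>y K\<bar> / Q ^ m) \<longlonglongrightarrow> 0" by (rule LIMSEQ_divide_realpow_zero[OF Q])
  then obtain M where M: "\<And>m. m \<ge> M \<Longrightarrow> \<bar>y K\<bar> / Q ^ m < r / 2"
    using LIMSEQ_D[of _ 0 "r / 2"] r Q by fastforce
  have "Q - 1 \<noteq> 0" using Q by simp
  then have half: "r * (Q - 1) / 2 / (Q - 1) = r / 2" by (simp add: field_simps)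
  have bound: "\<bar>y (K + m)\<bar> < r" if "m \<ge> M" for m
    using affine_recursion_bound[where y = y and e = e and Q = Q and K = K and m = m, OF Q rec K] M[OF that] half
    by linarith
  show "\<exists>no. \<forall>n\<ge>no. norm (y n - 0) < r"
  proof (intro exI allI impI)
    fix n assume n: "n \<ge> K + M"
    have "\<bar>y (K + (n - K))\<bar> < r" using n by (intro bound) auto
    then show "norm (y n - 0) < r" using n by simp
  qed
qed

lemma affine_recursion_tendsto:
  fixes x s :: "nat \<Rightarrow> real"
  assumes Q: "Q > 1" and rec: "\<And>k. x (Suc k) = (x k + s k) / Q" and s: "s \<longlonglongrightarrow> S"
  shows "x \<longlonglongrightarrow> S / (Q - 1)"
proof -
  have "(\<lambda>k. x k - S / (Q - 1)) \<longlonglongrightarrow> 0"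
  proof (rule affine_recursion_tendsto_0[OF Q])
    show "x (Suc k) - S / (Q - 1) = (x k - S / (Q - 1) + (s k - S)) / Q" for k
      using Q by (simp add: rec field_simps)
    show "(\<lambda>k. s k - S) \<longlonglongrightarrow> 0" using s by (simp add: LIM_zero)
  qed
  then show ?thesis by (simp add: LIM_zero_iff)
qed

lemma monic_divisors_1: "monic_divisors (1 :: 'a::field poly) = {1}"
proof -
  have "g = 1" if "monic_poly g" "g dvd 1" for g :: "'a poly"
    using monic_poly_degree_0[OF that(1)] dvd_imp_degree_le[OF that(2)] by simp
  then show ?thesis unfolding monic_divisors_def monic_poly_def by auto
qed

lemma conv_alpha_GL_1: "conv_alpha_GL k (1 :: 'a::{finite,field} poly) = 1"
proof (induction k)
  case (Suc k)
  then show ?case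
    using conv_alpha_GL_Suc_unit[of "1 :: 'a poly" k] by (simp add: monic_poly_def monic_divisors_1 poly_norm_def)
qed simp

lemma degree_less_of_proper_monic_divisor:
  assumes f: "monic_poly f" and h: "h \<in> monic_divisors f" and hf: "h \<noteq> f"
  shows "degree h < degree f"
proof -
  have prod: "h * (f div h) = f" and c: "f div h \<in> monic_divisors f" using monic_mult_div[OF f h] by auto
  then have "f div h \<noteq> 1" using hf by auto
  then have "degree (f div h) \<noteq> 0" using c monic_poly_degree_0 unfolding monic_divisors_def by auto
  moreover have "h \<noteq> 0" "f div h \<noteq> 0" using h c unfolding monic_divisors_def monic_poly_def by auto
  then have "degree f = degree h + degree (f div h)" using degree_mult_eq prod by metis
  ultimately show ?thesis by simp
qed

lemma conv_alpha_GL_tendsto_P_mat: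
  assumes "monic_poly (f :: 'a::{finite,field} poly)" "poly f 0 \<noteq> 0"
  shows "(\<lambda>k. conv_alpha_GL k f) \<longlonglongrightarrow> P_mat f"
  using assms
proof (induction "degree f" arbitrary: f rule: less_induct)
  case less
  note f = less.prems(1) and f0 = less.prems(2)
  show ?case
  proof (cases "degree f = 0")
    case True
    then have "f = 1" using f monic_poly_degree_0 by blast
    then show ?thesis by (simp add: conv_alpha_GL_1 P_mat_1)
  next
    case False
    let ?A = "monic_divisors f - {f}"
    have "f \<noteq> 0" using f unfolding monic_poly_def by auto
    then have "finite (monic_divisors f)" by (rule finite_monic_divisors)
    moreover have "f \<in> monic_divisors f" using f unfolding monic_divisors_def by simp
    ultimately have split: "(\<Sum>h\<in>monic_divisors f. F h) = F f + (\<Sum>h\<in>?A. F h)" for F :: "'a poly \<Rightarrow> real"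
      by (rule sum.remove)
    have gt1: "poly_norm f > 1" using False by (intro poly_norm_gt_1) simp
    have divisors: "(\<lambda>k. \<Sum>h\<in>?A. conv_alpha_GL k h) \<longlonglongrightarrow> (\<Sum>h\<in>?A. P_mat h)"
    proof (intro tendsto_sum less.hyps)
      fix h assume h: "h \<in> ?A"
      then show "degree h < degree f" using degree_less_of_proper_monic_divisor[OF f] by auto
      show "monic_poly h" using h unfolding monic_divisors_def by auto
      show "poly h 0 \<noteq> 0" using poly_0_monic_divisor[OF f] h f0 by auto
    qed
    have rec: "conv_alpha_GL (Suc k) f = (conv_alpha_GL k f + (\<Sum>h\<in>?A. conv_alpha_GL k h)) / poly_norm f" for k
      using conv_alpha_GL_Suc_unit[OF f f0, of k] split by simp
    have "(\<lambda>k. conv_alpha_GL k f) \<longlonglongrightarrow> (\<Sum>h\<in>?A. P_mat h) / (poly_norm f - 1)"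
      by (rule affine_recursion_tendsto[where x = "\<lambda>k. conv_alpha_GL k f", OF gt1 rec divisors])
    moreover have "poly_norm f * P_mat f = P_mat f + (\<Sum>h\<in>?A. P_mat h)"
      using P_mat_divisor_sum[OF f] split unfolding poly_norm_def by simp
    then have "P_mat f = (\<Sum>h\<in>?A. P_mat h) / (poly_norm f - 1)"
      using gt1 by (simp add: eq_divide_eq algebra_simps)
    ultimately show ?thesis by simp
  qed
qed

theorem theorem3p4:
  fixes f :: "'a::{finite,field} poly"
  assumes "monic_poly f"
  shows "(\<lambda>k. conv_alpha_GL k f) \<longlonglongrightarrow> P_GL f"
proof (cases "poly f 0 = 0")
  case True
  then show ?thesis using conv_alpha_GL_eq_0[OF assms True] P_GL_eq_0[OF True] by simp
next
  case False
  then show ?thesis using conv_alpha_GL_tendsto_P_mat[OF assms False] P_GL_eq_P_mat[OF False] by simp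
qed

end
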